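(* Fix a player $i$ and suppress the index $i$ (write $d=d_i$, $\theta=\theta_i$, $Q=Q_i$). Assume $\theta$ is steep. Let $Y(t)$ be a solution of the FTQL dynamics and $X(t)=Q(Y(t))$ (player $i$'s component). Let $X(t)=\sum_{\alpha=1}^{d}x_\alpha(t)\,u_\alpha(t)u_\alpha(t)^\dagger$ be an eigendecomposition of $X(t)$ with orthonormal eigenvectors $u_\alpha(t)\in\mathbb C^{d}$, where the eigenvalues $x_\alpha(t)$ and eigenvectors $u_\alpha(t)$ depend differentiably on $t$. Write $V_{\alpha\beta}=u_\alpha^\dagger V_i(X)\,u_\beta$ and $[\dot X]_{\alpha\beta}=u_\alpha^\dagger \dot X u_\beta$. Then $$[\dot X]_{\alpha\beta}=\begin{cases}\dfrac{V_{\alpha\alpha}}{\theta''(x_\alpha)}-\dfrac{\sum_{\gamma}V_{\gamma\gamma}/\theta''(x_\gamma)}{\sum_{\gamma}\theta''(x_\alpha)/\theta''(x_\gamma)}, & \alpha=\beta,\\[2ex] \dfrac{x_\beta-x_\alpha}{\theta'(x_\beta)-\theta'(x_\alpha)}\,V_{\alpha\beta}, & \alpha\neq\beta,\end{cases}$$ with the convention $(x-y)/(\theta'(x)-\theta'(y)):=1/\theta''(x)$ when $y=x$.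
   Context: Quantum game: finite set of players $i\in\{1,\dots,N\}$; for each $i$ an integer $d_i\ge1$. $\mathbb H^{d}$ denotes the real vector space of $d\times d$ complex Hermitian matrices. Player $i$'s set of mixed states is the spectraplex $\mathcal X_i=\{X_i\in\mathbb H^{d_i}:X_i\succeq0,\ \operatorname{tr}X_i=1\}$, and $\mathcal X=\prod_i\mathcal X_i$. There is a finite outcome set $\Omega$, positive semidefinite operators $P_\omega$ on $\mathbb C^{d_1}\otimes\cdots\otimes\mathbb C^{d_N}$ with $\sum_\omega P_\omega=I$, and real functions $U_i:\Omega\to\mathbb R$; the payoff of player $i$ is $u_i(X)=\sum_{\omega}U_i(\omega)\operatorname{tr}[P_\omega(X_1\otimes\cdots\otimes X_N)]$, which is linear in each $X_j$ separately. The payoff gradient $V_i(X)\in\mathbb H^{d_i}$ is the unique Hermitian matrix with $\sum_\omega U_i(\omega)\operatorname{tr}[P_\omega(X_1\otimes\cdots\otimes X_{i-1}\otimes A\otimes X_{i+1}\otimes\cdots\otimes X_N)]=\operatorname{tr}(A\,V_i(X))$ for all $A\in\mathbb H^{d_i}$; it does not depend on $X_i$ and $u_i(X)=\operatorname{tr}(X_iV_i(X))$. For a function $f:\mathbb R\to\mathbb R$ (or on an interval) and Hermitian $A=\sum_k\lambda_kv_kv_k^\dagger$, $f(A)=\sum_kf(\lambda_k)v_kv_k^\dagger$. Regularizers: for each $i$, $h_i(X_i)=\operatorname{tr}\theta_i(X_i)$ where $\theta_i:[0,1]\to\mathbb R$ is continuous, twice differentiable on $(0,1]$, $\theta_i(0)=0$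 and $\inf_{x\in(0,1]}\theta_i''(x)>0$; $\theta_i$ is called steep if $\lim_{x\to0^+}\theta_i'(x)=-\infty$. Mirror map: $Q_i(Y_i)=\arg\max_{X_i\in\mathcal X_i}\{\operatorname{tr}(Y_iX_i)-h_i(X_i)\}$ for $Y_i\in\mathbb H^{d_i}$, and $Q=\prod_iQ_i$. The FTQL dynamics are $\dot Y_i(t)=V_i(X(t))$, $X_i(t)=Q_i(Y_i(t))$ for all $i$, with initial condition $Y(0)\in\prod_i\mathbb H^{d_i}$. *)

theory Defs
  imports "HOL-Analysis.Analysis"
begin

text \<open>Complex d x d matrices are represented as functions nat => nat => complex,
  with indices 0..<d; entries outside that range are required to be 0 where relevant.\<close>

type_synonym cmat = "nat \<Rightarrow> nat \<Rightarrow> complex"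

definition herm :: "nat \<Rightarrow> cmat \<Rightarrow> bool" where
  "herm d A \<longleftrightarrow> (\<forall>j k. (j < d \<and> k < d \<longrightarrow> A j k = cnj (A k j))
                       \<and> (\<not> (j < d \<and> k < d) \<longrightarrow> A j k = 0))"

definition mtrace :: "nat \<Rightarrow> cmat \<Rightarrow> complex" where
  "mtrace d A = (\<Sum>j<d. A j j)"

definition mmult :: "nat \<Rightarrow> cmat \<Rightarrow> cmat \<Rightarrow> cmat" where
  "mmult d A B = (\<lambda>j k. if j < d \<and> k < d then (\<Sum>l<d. A j l * B l k) else 0)"

definition psd :: "nat \<Rightarrow> cmat \<Rightarrow> bool" where
  "psd d A \<longleftrightarrow> herm d A \<and>
     (\<forall>v :: nat \<Rightarrow> complex. 0 \<le> Re (\<Sum>j<d. \<Sum>k<d. cnj (v j) * A j k * v k))"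

definition spectraplex :: "nat \<Rightarrow> cmat set" where
  "spectraplex d = {X. psd d X \<and> mtrace d X = 1}"

text \<open>v a is the a-th vector (components v a j, j < d); orthonormal family of d vectors.\<close>
definition orthonormal_fam :: "nat \<Rightarrow> (nat \<Rightarrow> nat \<Rightarrow> complex) \<Rightarrow> bool" where
  "orthonormal_fam d v \<longleftrightarrow>
     (\<forall>a<d. \<forall>b<d. (\<Sum>j<d. cnj (v a j) * v b j) = (if a = b then 1 else 0))"

definition eig_decomp :: "nat \<Rightarrow> cmat \<Rightarrow> (nat \<Rightarrow> real) \<Rightarrow> (nat \<Rightarrow> nat \<Rightarrow> complex) \<Rightarrow> bool" where
  "eig_decomp d A lam v \<longleftrightarrow> orthonormal_fam d v \<and>
     (\<forall>j<d. \<forall>k<d. A j k = (\<Sum>a<d. of_real (lam a) * v a j * cnj (v a k)))"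

definition mat_fun :: "nat \<Rightarrow> (real \<Rightarrow> real) \<Rightarrow> cmat \<Rightarrow> cmat" where
  "mat_fun d f A = (THE B. \<exists>lam v. eig_decomp d A lam v \<and>
     (\<forall>j k. B j k = (if j < d \<and> k < d
                      then (\<Sum>a<d. of_real (f (lam a)) * v a j * cnj (v a k)) else 0)))"

definition hreg :: "nat \<Rightarrow> (real \<Rightarrow> real) \<Rightarrow> cmat \<Rightarrow> real" where
  "hreg d \<theta> X = Re (mtrace d (mat_fun d \<theta> X))"

definition Qmap :: "nat \<Rightarrow> (real \<Rightarrow> real) \<Rightarrow> cmat \<Rightarrow> cmat" where
  "Qmap d \<theta> Y = (THE X. X \<in> spectraplex d \<and>
     (\<forall>X' \<in> spectraplex d. Re (mtrace d (mmult d Y X')) - hreg d \<theta> X'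
                           \<le> Re (mtrace d (mmult d Y X)) - hreg d \<theta> X))"

text \<open>Joint system: players 0..<N, joint basis index a :: nat => nat with a p < d p for p < N
  and a p = 0 for p >= N.  Operators on the tensor product are functions of two joint indices.\<close>

definition jidx :: "nat \<Rightarrow> (nat \<Rightarrow> nat) \<Rightarrow> (nat \<Rightarrow> nat) set" where
  "jidx N d = {a. \<forall>p. (p < N \<longrightarrow> a p < d p) \<and> (N \<le> p \<longrightarrow> a p = 0)}"

type_synonym jop = "(nat \<Rightarrow> nat) \<Rightarrow> (nat \<Rightarrow> nat) \<Rightarrow> complex"

definition tensor :: "nat \<Rightarrow> (nat \<Rightarrow> cmat) \<Rightarrow> jop" where
  "tensor N X = (\<lambda>a b. \<Prod>p<N. X p (a p) (b p))"

definition jtrace_prod :: "nat \<Rightarrow> (nat \<Rightarrow> nat) \<Rightarrow> jop \<Rightarrow> jop \<Rightarrow> complex" where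
  "jtrace_prod N d P T = (\<Sum>a\<in>jidx N d. \<Sum>c\<in>jidx N d. P a c * T c a)"

definition jpsd :: "nat \<Rightarrow> (nat \<Rightarrow> nat) \<Rightarrow> jop \<Rightarrow> bool" where
  "jpsd N d P \<longleftrightarrow> (\<forall>a\<in>jidx N d. \<forall>b\<in>jidx N d. P a b = cnj (P b a)) \<and>
     (\<forall>v :: (nat \<Rightarrow> nat) \<Rightarrow> complex.
        0 \<le> Re (\<Sum>a\<in>jidx N d. \<Sum>b\<in>jidx N d. cnj (v a) * P a b * v b))"

definition povm :: "nat \<Rightarrow> (nat \<Rightarrow> nat) \<Rightarrow> 'w set \<Rightarrow> ('w \<Rightarrow> jop) \<Rightarrow> bool" where
  "povm N d \<Omega> P \<longleftrightarrow> finite \<Omega> \<and> (\<forall>\<omega>\<in>\<Omega>. jpsd N d (P \<omega>)) \<and>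
     (\<forall>a\<in>jidx N d. \<forall>b\<in>jidx N d. (\<Sum>\<omega>\<in>\<Omega>. P \<omega> a b) = (if a = b then 1 else 0))"

definition Vgrad :: "nat \<Rightarrow> (nat \<Rightarrow> nat) \<Rightarrow> 'w set \<Rightarrow> ('w \<Rightarrow> jop) \<Rightarrow> (nat \<Rightarrow> 'w \<Rightarrow> real)
                     \<Rightarrow> nat \<Rightarrow> (nat \<Rightarrow> cmat) \<Rightarrow> cmat" where
  "Vgrad N d \<Omega> P U i X = (THE V. herm (d i) V \<and>
     (\<forall>A. herm (d i) A \<longrightarrow>
        (\<Sum>\<omega>\<in>\<Omega>. of_real (U i \<omega>) * jtrace_prod N d (P \<omega>) (tensor N (X(i := A))))
          = mtrace (d i) (mmult (d i) A V)))"

definition regularizer_kernel :: "(real \<Rightarrow> real) \<Rightarrow> (real \<Rightarrow> real) \<Rightarrow> (real \<Rightarrow> real) \<Rightarrow> bool" where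
  "regularizer_kernel \<theta> th1 th2 \<longleftrightarrow>
     continuous_on {0..1} \<theta> \<and> \<theta> 0 = 0 \<and>
     (\<forall>x\<in>{0<..1}. (\<theta> has_real_derivative th1 x) (at x within {0<..1})) \<and>
     (\<forall>x\<in>{0<..1}. (th1 has_real_derivative th2 x) (at x within {0<..1})) \<and>
     (\<exists>c>0. \<forall>x\<in>{0<..1}. c \<le> th2 x)"

definition steep :: "(real \<Rightarrow> real) \<Rightarrow> bool" where
  "steep th1 \<longleftrightarrow> filterlim th1 at_bot (at_right 0)"

definition mel :: "nat \<Rightarrow> (nat \<Rightarrow> nat \<Rightarrow> complex) \<Rightarrow> cmat \<Rightarrow> nat \<Rightarrow> nat \<Rightarrow> complex" where
  "mel d u M a b = (\<Sum>j<d. \<Sum>k<d. cnj (u a j) * M j k * u b k)"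

definition dquot :: "(real \<Rightarrow> real) \<Rightarrow> (real \<Rightarrow> real) \<Rightarrow> real \<Rightarrow> real \<Rightarrow> real" where
  "dquot th1 th2 x y = (if y = x then 1 / th2 x else (x - y) / (th1 x - th1 y))"

end

theory Submission
  imports Defs "Jordan_Normal_Form.Spectral_Radius"
begin

text \<open>
  Diagonalise \<open>Y = \<Sum>\<^sub>k \<lambda>\<^sub>k w\<^sub>k w\<^sub>k\<^sup>\<dagger>\<close>. In eigenbases of \<open>Y\<close> and of a density matrix \<open>X\<close> the mirror
  objective \<open>tr(YX) - tr \<theta>(X)\<close> is an average, with doubly stochastic weights \<open>|\<langle>w\<^sub>k, u\<^sub>a\<rangle>|\<^sup>2\<close>,
  of scalar objectives \<open>\<lambda>\<^sub>k x\<^sub>a - \<theta>(x\<^sub>a)\<close>; by strict convexity of \<open>\<theta>\<close> it is uniquely maximised by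
  \<open>Q(Y) = \<Sum>\<^sub>k q\<^sub>k w\<^sub>k w\<^sub>k\<^sup>\<dagger>\<close>, where \<open>\<theta>'(q\<^sub>k) = \<lambda>\<^sub>k - \<mu>\<close> and steepness makes all \<open>q\<^sub>k > 0\<close>. Hence
  every eigenvector \<open>u\<^sub>\<alpha>\<close> of \<open>X = Q(Y)\<close> is an eigenvector of \<open>Y\<close> with eigenvalue \<open>\<theta>'(x\<^sub>\<alpha>) + \<mu>\<close>.
  Differentiating the eigen-equations of \<open>X\<close> and \<open>Y\<close> in the moving orthonormal basis \<open>u(t)\<close> gives
  \<open>[X']\<^sub>\<alpha>\<^sub>\<beta> = (x\<^sub>\<beta> - x\<^sub>\<alpha>) c\<^sub>\<alpha>\<^sub>\<beta>\<close> and \<open>[Y']\<^sub>\<alpha>\<^sub>\<beta> = (\<theta>'(x\<^sub>\<beta>) - \<theta>'(x\<^sub>\<alpha>)) c\<^sub>\<alpha>\<^sub>\<beta>\<close> off the diagonal,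
  and \<open>[Y']\<^sub>\<alpha>\<^sub>\<alpha> = \<theta>''(x\<^sub>\<alpha>) [X']\<^sub>\<alpha>\<^sub>\<alpha> + \<mu>'\<close> on it, where \<open>\<mu>'\<close> is determined by \<open>tr X' = 0\<close>.
\<close>

section \<open>Inner products and orthonormal families\<close>

lemma homogeneous_system_nontrivial_solution:
  fixes r :: "nat \<Rightarrow> nat \<Rightarrow> complex"
  assumes "k < n"
  shows "\<exists>w. (\<exists>j<n. w j \<noteq> 0) \<and> (\<forall>i<k. (\<Sum>j<n. r i j * w j) = 0)"
proof -
  define M where "M = mat\<^sub>r n n (\<lambda>i. if i = k then 0\<^sub>v n else vec n (\<lambda>j. if i < k then r i j else 0))"
  have "det M = 0" unfolding M_def by (rule det_row_0[OF assms]) auto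
  then obtain v where v: "v \<in> carrier_vec n" "v \<noteq> 0\<^sub>v n" "M *\<^sub>v v = 0\<^sub>v n"
    using det_0_iff_vec_prod_zero[of M n] by (auto simp: M_def)
  have "\<exists>j<n. v $ j \<noteq> 0" using v(1,2) by (metis eq_vecI carrier_vecD index_zero_vec)
  moreover have "(\<Sum>j<n. r i j * v $ j) = 0" if "i < k" for i
  proof -
    have "(M *\<^sub>v v) $ i = 0" using v(3) that assms by simp
    then show ?thesis using that assms v(1)
      by (simp add: M_def scalar_prod_def atLeast0LessThan mult.commute)
  qed
  ultimately show ?thesis by (intro exI[of _ "\<lambda>j. v $ j"]) auto
qed

definition vinner :: "nat \<Rightarrow> (nat \<Rightarrow> complex) \<Rightarrow> (nat \<Rightarrow> complex) \<Rightarrow> complex" where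
  "vinner d v w = (\<Sum>j<d. cnj (v j) * w j)"

definition matvec :: "nat \<Rightarrow> cmat \<Rightarrow> (nat \<Rightarrow> complex) \<Rightarrow> nat \<Rightarrow> complex" where
  "matvec d A v = (\<lambda>j. \<Sum>l<d. A j l * v l)"

lemma mult_cnj_eq_cmod_sq: "z * cnj z = (complex_of_real (cmod z))\<^sup>2"
  by (metis complex_norm_square of_real_power)

lemma vinner_self: "vinner d v v = of_real (\<Sum>j<d. (cmod (v j))\<^sup>2)"
  unfolding vinner_def of_real_sum by (rule sum.cong[OF refl]) (metis complex_norm_square mult.commute)

lemma vinner_self_eq_0:
  assumes "vinner d v v = 0" and "j < d"
  shows "v j = 0"
proof -
  have "(\<Sum>j<d. (cmod (v j))\<^sup>2) = 0" using assms(1) unfolding vinner_self of_real_eq_0_iff .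
  then show ?thesis using assms(2) by (simp add: sum_nonneg_eq_0_iff)
qed

lemma vinner_commute: "vinner d u w = cnj (vinner d w u)"
  unfolding vinner_def by (simp add: mult.commute)

lemma vinner_scale: "vinner d (\<lambda>j. c * v j) (\<lambda>j. c' * w j) = cnj c * c' * vinner d v w"
  unfolding vinner_def by (simp add: sum_distrib_left algebra_simps)

lemma vinner_cong:
  "(\<And>j. j < d \<Longrightarrow> u j = u' j) \<Longrightarrow> (\<And>j. j < d \<Longrightarrow> v j = v' j) \<Longrightarrow> vinner d u v = vinner d u' v'"
  unfolding vinner_def by (rule sum.cong) auto

lemma vinner_scale_cong:
  assumes "\<And>j. j < d \<Longrightarrow> u' j = c * u j" and "\<And>j. j < d \<Longrightarrow> v' j = c' * v j"
  shows "vinner d u' v' = cnj c * c' * vinner d u v"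
  by (subst vinner_cong[OF assms]) (simp_all add: vinner_scale)

lemma vinner_sum_right: "vinner d u (\<lambda>j. \<Sum>q<m. c q * v q j) = (\<Sum>q<m. c q * vinner d u (v q))"
  unfolding vinner_def sum_distrib_left by (subst sum.swap) (simp only: mult.left_commute)

lemma matvec_sum: "matvec d A (\<lambda>j. \<Sum>q<m. c q * v q j) j = (\<Sum>q<m. c q * matvec d A (v q) j)"
  unfolding matvec_def sum_distrib_left by (subst sum.swap) (simp only: mult.left_commute)

lemma vinner_matvec_eq_sum: "vinner d u (matvec d A v) = (\<Sum>j<d. \<Sum>l<d. cnj (u j) * A j l * v l)"
  unfolding vinner_def matvec_def by (simp add: sum_distrib_left mult.assoc)

lemma mel_eq_vinner: "mel d u M a b = vinner d (u a) (matvec d M (u b))"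
  unfolding mel_def vinner_matvec_eq_sum ..

lemma vinner_matvec_selfadjoint:
  assumes A: "\<forall>j<d. \<forall>l<d. A j l = cnj (A l j)"
  shows "vinner d u (matvec d A v) = vinner d (matvec d A u) v"
proof -
  have "vinner d u (matvec d A v) = (\<Sum>l<d. \<Sum>j<d. cnj (u j) * A j l * v l)"
    unfolding vinner_matvec_eq_sum by (rule sum.swap)
  also have "\<dots> = (\<Sum>l<d. \<Sum>j<d. cnj (A l j * u j) * v l)"
  proof (intro sum.cong refl)
    fix l j assume "l \<in> {..<d}" "j \<in> {..<d}"
    then have "A j l = cnj (A l j)" using A by blast
    then show "cnj (u j) * A j l * v l = cnj (A l j * u j) * v l" by (simp add: mult.commute)
  qed
  also have "\<dots> = vinner d (matvec d A u) v"
    unfolding vinner_def matvec_def by (simp add: sum_distrib_right)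
  finally show ?thesis .
qed

lemma herm_selfadjoint: "herm d A \<Longrightarrow> \<forall>j<d. \<forall>l<d. A j l = cnj (A l j)"
  unfolding herm_def by blast

definition orthonormal_upto :: "nat \<Rightarrow> nat \<Rightarrow> (nat \<Rightarrow> nat \<Rightarrow> complex) \<Rightarrow> bool" where
  "orthonormal_upto k d v \<longleftrightarrow> (\<forall>a<k. \<forall>b<k. vinner d (v a) (v b) = (if a = b then 1 else 0))"

lemma orthonormal_fam_iff_upto: "orthonormal_fam d v \<longleftrightarrow> orthonormal_upto d d v"
  unfolding orthonormal_upto_def orthonormal_fam_def vinner_def ..

lemma orthonormal_fam_vinner:
  "orthonormal_fam d v \<Longrightarrow> a < d \<Longrightarrow> b < d \<Longrightarrow> vinner d (v a) (v b) = (if a = b then 1 else 0)"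
  unfolding orthonormal_fam_iff_upto orthonormal_upto_def by blast

text \<open>Otherwise the family together with \<open>z\<close> would be \<open>d + 1\<close> linearly independent vectors in
  \<open>\<complex>\<^sup>d\<close>.\<close>
lemma orthonormal_fam_complete:
  assumes on: "orthonormal_fam d v" and orth: "\<forall>a<d. vinner d (v a) z = 0" and j: "j < d"
  shows "z j = 0"
proof (rule ccontr)
  assume "z j \<noteq> 0"
  then have zz: "vinner d z z \<noteq> 0" using vinner_self_eq_0 j by blast
  define U where "U = (\<lambda>a. if a < d then v a else z)"
  obtain c where c: "\<exists>a<Suc d. c a \<noteq> 0" "\<forall>i<d. (\<Sum>a<Suc d. U a i * c a) = 0"
    using homogeneous_system_nontrivial_solution[of d "Suc d" "\<lambda>i a. U a i"] by auto
  have dependent: "(\<Sum>a<Suc d. c a * vinner d y (U a)) = 0" for y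
  proof -
    have "(\<Sum>a<Suc d. c a * vinner d y (U a)) = vinner d y (\<lambda>i. \<Sum>a<Suc d. c a * U a i)"
      by (rule vinner_sum_right[symmetric])
    also have "\<dots> = 0" unfolding vinner_def using c(2) by (simp add: mult.commute)
    finally show ?thesis .
  qed
  have cb: "c b = 0" if b: "b < d" for b
  proof -
    have "(\<Sum>a<Suc d. c a * vinner d (v b) (U a)) = (\<Sum>a<Suc d. if a = b then c a else 0)"
      using b orth by (intro sum.cong) (auto simp: U_def orthonormal_fam_vinner[OF on])
    then show ?thesis using dependent[of "v b"] b by simp
  qed
  have "(\<Sum>a<Suc d. c a * vinner d z (U a)) = c d * vinner d z z"
    using cb by (simp add: U_def)
  then have "c d = 0" using dependent[of z] zz by simp
  then show False using c(1) cb by (metis less_SucE)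
qed

lemma orthonormal_expansion:
  assumes on: "orthonormal_fam d v" and j: "j < d"
  shows "w j = (\<Sum>a<d. vinner d (v a) w * v a j)"
proof -
  define z where "z = (\<lambda>j. w j - (\<Sum>a<d. vinner d (v a) w * v a j))"
  have "vinner d (v b) z = 0" if b: "b < d" for b
  proof -
    have "vinner d (v b) z = vinner d (v b) w - (\<Sum>a<d. vinner d (v a) w * vinner d (v b) (v a))"
      unfolding z_def vinner_sum_right[symmetric] by (simp add: vinner_def right_diff_distrib sum_subtractf)
    also have "\<dots> = 0" using b by (simp add: orthonormal_fam_vinner[OF on] if_distrib cong: if_cong)
    finally show ?thesis .
  qed
  then have "z j = 0" by (intro orthonormal_fam_complete[OF on _ j]) auto
  then show ?thesis unfolding z_def by simp
qed

lemma orthonormal_fam_completeness: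
  assumes on: "orthonormal_fam d v" and j: "j < d" and k: "k < d"
  shows "(\<Sum>a<d. v a j * cnj (v a k)) = (if j = k then 1 else 0)"
proof -
  have "vinner d (v a) (\<lambda>l. if l = k then 1 else 0) = cnj (v a k)" for a
    unfolding vinner_def using k by (simp add: if_distrib cong: if_cong)
  then show ?thesis
    using orthonormal_expansion[OF on j, of "\<lambda>l. if l = k then 1 else 0"] by (simp add: mult.commute)
qed

lemma parseval:
  assumes on: "orthonormal_fam d v"
  shows "vinner d y w = (\<Sum>a<d. cnj (vinner d (v a) y) * vinner d (v a) w)"
proof -
  have "vinner d y w = vinner d y (\<lambda>j. \<Sum>a<d. vinner d (v a) w * v a j)"
    using orthonormal_expansion[OF on] by (intro vinner_cong) auto
  also have "\<dots> = (\<Sum>a<d. cnj (vinner d (v a) y) * vinner d (v a) w)"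
    unfolding vinner_sum_right by (simp add: vinner_commute[of d y] mult.commute)
  finally show ?thesis .
qed

lemma exists_unit_multiple:
  assumes "\<exists>j<d. w j \<noteq> 0"
  shows "\<exists>c::real. vinner d (\<lambda>j. of_real c * w j) (\<lambda>j. of_real c * w j) = 1"
proof -
  define s where "s = (\<Sum>j<d. (cmod (w j))\<^sup>2)"
  have "vinner d w w = of_real s" unfolding s_def by (rule vinner_self)
  then have "s \<noteq> 0" using assms vinner_self_eq_0 by fastforce
  then have "s > 0" unfolding s_def by (simp add: order_less_le sum_nonneg)
  then have "vinner d (\<lambda>j. of_real (1 / sqrt s) * w j) (\<lambda>j. of_real (1 / sqrt s) * w j) = 1"
    unfolding vinner_scale vinner_self s_def[symmetric] by (simp flip: of_real_mult)
  then show ?thesis by blast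
qed

lemma orthonormal_upto_Suc:
  assumes "orthonormal_upto k d b" and "\<forall>a<k. vinner d (b a) w = 0" and "vinner d w w = 1"
  shows "orthonormal_upto (Suc k) d (b(k := w))"
proof -
  have "vinner d w (b a) = 0" if "a < k" for a
    using assms(2) that vinner_commute[of d w "b a"] by simp
  then show ?thesis using assms unfolding orthonormal_upto_def less_Suc_eq by auto
qed

lemma orthonormal_upto_extend:
  assumes "orthonormal_upto k d b" "k < d"
  shows "\<exists>w. orthonormal_upto (Suc k) d (b(k := w))"
proof -
  obtain w where w: "\<exists>j<d. w j \<noteq> 0" "\<forall>a<k. (\<Sum>j<d. cnj (b a j) * w j) = 0"
    using homogeneous_system_nontrivial_solution[of k d "\<lambda>a j. cnj (b a j)"] assms by auto
  then obtain c where c: "vinner d (\<lambda>j. of_real c * w j) (\<lambda>j. of_real c * w j) = 1"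
    using exists_unit_multiple by blast
  have "vinner d (b a) (\<lambda>j. of_real c * w j) = 0" if "a < k" for a
    using vinner_scale[of d 1 "b a" "of_real c" w] w(2) that by (simp add: vinner_def)
  then show ?thesis using orthonormal_upto_Suc[OF assms(1) _ c] by blast
qed

lemma orthonormal_basis_extension:
  assumes "orthonormal_upto k d b" "k \<le> d"
  shows "\<exists>b'. orthonormal_fam d b' \<and> (\<forall>a<k. b' a = b a)"
proof -
  have "\<exists>b'. orthonormal_upto m d b' \<and> (\<forall>a<k. b' a = b a)" if "k \<le> m" "m \<le> d" for m
    using that
  proof (induction m rule: dec_induct)
    case base
    then show ?case using assms(1) by blast
  next
    case (step m)
    then obtain b' where "orthonormal_upto m d b'" "\<forall>a<k. b' a = b a" by auto
    with step show ?case using orthonormal_upto_extend[of m d b'] by fastforce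
  qed
  then have "\<exists>b'. orthonormal_upto d d b' \<and> (\<forall>a<k. b' a = b a)" using assms(2) by blast
  then show ?thesis unfolding orthonormal_fam_iff_upto .
qed

lemma orthonormal_fam_imp_upto: "orthonormal_fam d b \<Longrightarrow> k \<le> d \<Longrightarrow> orthonormal_upto k d b"
  unfolding orthonormal_fam_iff_upto orthonormal_upto_def by simp

section \<open>The spectral theorem\<close>

lemma exists_eigenvector:
  assumes d: "0 < d"
  shows "\<exists>e v. (\<exists>j<d. v j \<noteq> 0) \<and> (\<forall>j<d. matvec d A v j = e * v j)"
proof -
  define M where "M = mat d d (\<lambda>(i,j). A i j)"
  have M: "M \<in> carrier_mat d d" unfolding M_def by simp
  from spectrum_non_empty[OF M d] obtain e where "eigenvalue M e" unfolding spectrum_def by auto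
  then obtain v where "eigenvector M v e" unfolding eigenvalue_def by auto
  then have v: "v \<in> carrier_vec d" "v \<noteq> 0\<^sub>v d" "M *\<^sub>v v = e \<cdot>\<^sub>v v"
    unfolding eigenvector_def using M by auto
  have "\<exists>j<d. v $ j \<noteq> 0" using v(1,2) by (metis eq_vecI carrier_vecD index_zero_vec)
  moreover have "matvec d A (\<lambda>j. v $ j) j = e * v $ j" if j: "j < d" for j
  proof -
    have "(M *\<^sub>v v) $ j = e * v $ j" using v(3) v(1) j by simp
    then show ?thesis
      using j M v(1) by (simp add: M_def matvec_def scalar_prod_def row_def atLeast0LessThan)
  qed
  ultimately show ?thesis by blast
qed

lemma eigenvalue_selfadjoint_real:
  assumes A: "\<forall>j<d. \<forall>l<d. A j l = cnj (A l j)" and w: "\<exists>j<d. w j \<noteq> 0"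
    and ev: "\<forall>j<d. matvec d A w j = e * w j"
  shows "e = of_real (Re e)"
proof -
  have ww: "vinner d w w \<noteq> 0" using w vinner_self_eq_0 by blast
  have "e * vinner d w w = vinner d w (matvec d A w)"
    using vinner_scale_cong[of d w 1 w "matvec d A w" e w] ev by simp
  also have "\<dots> = vinner d (matvec d A w) w" by (rule vinner_matvec_selfadjoint[OF A])
  also have "\<dots> = cnj e * vinner d w w"
    using vinner_scale_cong[of d "matvec d A w" e w w 1 w] ev by simp
  finally have "e = cnj e" using ww by simp
  then show ?thesis by (metis Reals_cnj_iff complex_is_Real_iff of_real_Re)
qed

lemma sum_lessThan_add: "(\<Sum>a<k + (m::nat). f a) = (\<Sum>a<k. f a) + (\<Sum>p<m. f (k + p))"
  by (induction m) (auto simp: add.assoc)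

text \<open>If \<open>b\<^sub>0, \<dots>, b\<^bsub>k-1\<^esub>\<close> are eigenvectors of a self-adjoint \<open>A\<close>, then \<open>A\<close> maps the span of the
  remaining basis vectors into itself.\<close>
lemma matvec_invariant_complement:
  assumes A: "\<forall>j<d. \<forall>l<d. A j l = cnj (A l j)" and on: "orthonormal_fam d b" and d: "d = k + m"
    and ev: "\<forall>a<k. \<forall>j<d. matvec d A (b a) j = of_real (lam a) * b a j"
    and q: "q < m" and j: "j < d"
  shows "matvec d A (b (k + q)) j =
           (\<Sum>p<m. vinner d (b (k + p)) (matvec d A (b (k + q))) * b (k + p) j)"
proof -
  have "vinner d (b a) (matvec d A (b (k + q))) = 0" if a: "a < k" for a
  proof -
    have "vinner d (b a) (matvec d A (b (k + q))) = vinner d (matvec d A (b a)) (b (k + q))"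
      by (rule vinner_matvec_selfadjoint[OF A])
    also have "\<dots> = of_real (lam a) * vinner d (b a) (b (k + q))"
      using vinner_scale_cong[of d "matvec d A (b a)" "of_real (lam a)" "b a" "b (k + q)" 1 "b (k + q)"]
        ev a d by simp
    also have "\<dots> = 0" using a q d orthonormal_fam_vinner[OF on, of a "k + q"] by simp
    finally show ?thesis .
  qed
  then show ?thesis
    using orthonormal_expansion[OF on j, of "matvec d A (b (k + q))"] unfolding d sum_lessThan_add
    by simp
qed

lemma eigenvector_orthogonal_to_eigenvectors:
  assumes A: "\<forall>j<d. \<forall>l<d. A j l = cnj (A l j)" and on: "orthonormal_fam d b" and k: "k < d"
    and ev: "\<forall>a<k. \<forall>j<d. matvec d A (b a) j = of_real (lam a) * b a j"
  shows "\<exists>e w. (\<exists>j<d. w j \<noteq> 0) \<and> (\<forall>a<k. vinner d (b a) w = 0) \<and> (\<forall>j<d. matvec d A w j = e * w j)"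
proof -
  define m where "m = d - k"
  have m: "0 < m" "d = k + m" using k by (auto simp: m_def)
  define B where "B = (\<lambda>p q. vinner d (b (k + p)) (matvec d A (b (k + q))))"
  obtain e c where c: "\<exists>p<m. c p \<noteq> 0" "\<forall>p<m. matvec m B c p = e * c p"
    using exists_eigenvector[OF m(1), of B] by auto
  define w where "w = (\<lambda>j. \<Sum>q<m. c q * b (k + q) j)"
  have orth: "vinner d (b a) w = (if a < k then 0 else c (a - k))" if a: "a < d" for a
  proof -
    have "vinner d (b a) w = (\<Sum>q<m. if q = a - k \<and> k \<le> a then c q else 0)"
      unfolding w_def vinner_sum_right using a m(2) orthonormal_fam_vinner[OF on a]
      by (intro sum.cong refl) auto
    then show ?thesis using a m(2) by auto
  qed
  have "matvec d A w j = e * w j" if j: "j < d" for j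
  proof -
    have "matvec d A w j = (\<Sum>q<m. \<Sum>p<m. c q * (B p q * b (k + p) j))"
      unfolding w_def matvec_sum B_def
      using matvec_invariant_complement[OF A on m(2) ev _ j] by (simp add: sum_distrib_left)
    also have "\<dots> = (\<Sum>p<m. matvec m B c p * b (k + p) j)"
      unfolding matvec_def sum_distrib_right by (subst sum.swap) (simp add: mult_ac)
    also have "\<dots> = e * w j" unfolding w_def using c(2) by (simp add: sum_distrib_left mult.assoc)
    finally show ?thesis .
  qed
  moreover have "\<exists>j<d. w j \<noteq> 0"
  proof (rule ccontr)
    assume "\<not> (\<exists>j<d. w j \<noteq> 0)"
    then have "vinner d (b a) w = 0" for a unfolding vinner_def by simp
    with orth c(1) m(2) show False by (metis add_diff_cancel_left' le_add1 nat_add_left_cancel_less not_less)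
  qed
  moreover have "\<forall>a<k. vinner d (b a) w = 0" using orth k by simp
  ultimately show ?thesis by blast
qed

lemma eigenbasis_extend:
  assumes A: "\<forall>j<d. \<forall>l<d. A j l = cnj (A l j)" and k: "k < d" and on: "orthonormal_fam d b"
    and ev: "\<forall>a<k. \<forall>j<d. matvec d A (b a) j = of_real (lam a) * b a j"
  shows "\<exists>b' lam'. orthonormal_fam d b' \<and>
     (\<forall>a<Suc k. \<forall>j<d. matvec d A (b' a) j = of_real (lam' a) * b' a j)"
proof -
  obtain e w where w: "\<exists>j<d. w j \<noteq> 0" "\<forall>a<k. vinner d (b a) w = 0"
    and ew: "\<forall>j<d. matvec d A w j = e * w j"
    using eigenvector_orthogonal_to_eigenvectors[OF A on k ev] by blast
  have e: "e = of_real (Re e)" by (rule eigenvalue_selfadjoint_real[OF A w(1) ew])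
  obtain c where c: "vinner d (\<lambda>j. of_real c * w j) (\<lambda>j. of_real c * w j) = 1"
    using exists_unit_multiple[OF w(1)] by blast
  define w' where "w' = (\<lambda>j. of_real c * w j)"
  have "vinner d (b a) w' = 0" if "a < k" for a
    using vinner_scale[of d 1 "b a" "of_real c" w] w(2) that by (simp add: w'_def)
  then have "orthonormal_upto (Suc k) d (b(k := w'))"
    using orthonormal_upto_Suc orthonormal_fam_imp_upto[OF on] k c unfolding w'_def by simp
  then obtain b' where b': "orthonormal_fam d b'" "\<forall>a<Suc k. b' a = (b(k := w')) a"
    using orthonormal_basis_extension k by (metis Suc_leI)
  have "matvec d A w' j = of_real (Re e) * w' j" if "j < d" for j
  proof -
    have "matvec d A w' j = of_real c * matvec d A w j"
      unfolding w'_def matvec_def by (simp add: sum_distrib_left mult.left_commute)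
    then show ?thesis using ew e that by (simp add: w'_def mult.left_commute)
  qed
  then have "\<forall>a<Suc k. \<forall>j<d. matvec d A (b' a) j = of_real ((lam(k := Re e)) a) * b' a j"
    using b'(2) ev less_Suc_eq by auto
  with b'(1) show ?thesis by blast
qed

lemma eig_decomp_of_eigenvectors:
  assumes on: "orthonormal_fam d b"
    and ev: "\<forall>a<d. \<forall>j<d. matvec d A (b a) j = of_real (lam a) * b a j"
  shows "eig_decomp d A lam b"
  unfolding eig_decomp_def
proof (intro conjI on allI impI)
  fix j l assume j: "j < d" and l: "l < d"
  have "A j l = (\<Sum>m<d. A j m * (\<Sum>a<d. b a m * cnj (b a l)))"
    using l by (simp add: orthonormal_fam_completeness[OF on _ l] if_distrib cong: if_cong)
  also have "\<dots> = (\<Sum>a<d. matvec d A (b a) j * cnj (b a l))"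
    unfolding matvec_def sum_distrib_left sum_distrib_right by (subst sum.swap) (simp add: mult_ac)
  also have "\<dots> = (\<Sum>a<d. of_real (lam a) * b a j * cnj (b a l))"
    using ev j by simp
  finally show "A j l = (\<Sum>a<d. of_real (lam a) * b a j * cnj (b a l))" .
qed

theorem spectral_theorem:
  assumes A: "\<forall>j<d. \<forall>l<d. A j l = cnj (A l j)"
  shows "\<exists>lam v. eig_decomp d A lam v"
proof -
  have "\<exists>b lam. orthonormal_fam d b \<and> (\<forall>a<k. \<forall>j<d. matvec d A (b a) j = of_real (lam a) * b a j)"
    if "k \<le> d" for k
    using that
  proof (induction k)
    case 0
    then show ?case using orthonormal_basis_extension[of 0 d] by (auto simp: orthonormal_upto_def)
  next
    case (Suc k)
    then show ?case using eigenbasis_extend[OF A] by (metis Suc_le_lessD less_imp_le_nat)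
  qed
  then show ?thesis using eig_decomp_of_eigenvectors by blast
qed


section \<open>Eigendecompositions\<close>

lemma eig_decomp_orthonormal: "eig_decomp d A lam v \<Longrightarrow> orthonormal_fam d v"
  unfolding eig_decomp_def by simp

lemma eig_decomp_selfadjoint: "eig_decomp d A lam v \<Longrightarrow> \<forall>j<d. \<forall>l<d. A j l = cnj (A l j)"
  unfolding eig_decomp_def by (auto simp: mult_ac)

lemma matvec_eig_decomp:
  assumes "eig_decomp d A lam v" and "j < d"
  shows "matvec d A u j = (\<Sum>a<d. of_real (lam a) * vinner d (v a) u * v a j)"
proof -
  have "matvec d A u j = (\<Sum>l<d. \<Sum>a<d. of_real (lam a) * v a j * (cnj (v a l) * u l))"
    unfolding matvec_def using assms unfolding eig_decomp_def
    by (intro sum.cong refl) (simp add: sum_distrib_right mult.assoc)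
  also have "\<dots> = (\<Sum>a<d. of_real (lam a) * vinner d (v a) u * v a j)"
    unfolding vinner_def by (subst sum.swap) (simp add: sum_distrib_left mult_ac)
  finally show ?thesis .
qed

lemma eigenvector_of_overlaps:
  assumes e: "eig_decomp d A lam v" and c: "\<forall>a<d. vinner d (v a) w \<noteq> 0 \<longrightarrow> lam a = c" and j: "j < d"
  shows "matvec d A w j = of_real c * w j"
proof -
  have "matvec d A w j = (\<Sum>a<d. of_real c * (vinner d (v a) w * v a j))"
    unfolding matvec_eig_decomp[OF e j] using c by (intro sum.cong refl) (auto simp: mult_ac)
  also have "\<dots> = of_real c * w j"
    by (simp add: sum_distrib_left[symmetric] orthonormal_expansion[OF eig_decomp_orthonormal[OF e] j, symmetric])
  finally show ?thesis .
qed

lemma eig_decomp_eigenvector: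
  assumes e: "eig_decomp d A lam v" and a: "a < d" and j: "j < d"
  shows "matvec d A (v a) j = of_real (lam a) * v a j"
  using eigenvector_of_overlaps[OF e _ j]
  by (simp add: orthonormal_fam_vinner[OF eig_decomp_orthonormal[OF e] _ a])

lemma eig_decomp_overlap_eigenvalue:
  assumes e1: "eig_decomp d A lam v" and e2: "eig_decomp d A mu w"
    and a: "a < d" and b: "b < d" and overlap: "vinner d (w b) (v a) \<noteq> 0"
  shows "lam a = mu b"
proof -
  have "of_real (lam a) * vinner d (w b) (v a) = vinner d (w b) (matvec d A (v a))"
    using vinner_scale_cong[of d "w b" 1 "w b" "matvec d A (v a)" "of_real (lam a)" "v a"]
      eig_decomp_eigenvector[OF e1 a] by simp
  also have "\<dots> = vinner d (matvec d A (w b)) (v a)"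
    by (rule vinner_matvec_selfadjoint[OF eig_decomp_selfadjoint[OF e1]])
  also have "\<dots> = of_real (mu b) * vinner d (w b) (v a)"
    using vinner_scale_cong[of d "matvec d A (w b)" "of_real (mu b)" "w b" "v a" 1 "v a"]
      eig_decomp_eigenvector[OF e2 b] by simp
  finally show ?thesis using overlap by simp
qed

lemma eig_decomp_fun:
  assumes e1: "eig_decomp d A lam v" and e2: "eig_decomp d A mu w" and B: "eig_decomp d B (f \<circ> lam) v"
  shows "eig_decomp d B (f \<circ> mu) w"
proof (rule eig_decomp_of_eigenvectors[OF eig_decomp_orthonormal[OF e2]], intro allI impI)
  fix b j assume b: "b < d" and j: "j < d"
  have "f (lam a) = f (mu b)" if "a < d" "vinner d (v a) (w b) \<noteq> 0" for a
    using eig_decomp_overlap_eigenvalue[OF e1 e2 that(1) b] that(2) vinner_commute[of d "w b"] by auto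
  then show "matvec d B (w b) j = of_real ((f \<circ> mu) b) * w b j"
    using eigenvector_of_overlaps[OF B _ j] by simp
qed

definition spectral_mat :: "nat \<Rightarrow> (nat \<Rightarrow> real) \<Rightarrow> (nat \<Rightarrow> nat \<Rightarrow> complex) \<Rightarrow> cmat" where
  "spectral_mat d lam v =
     (\<lambda>j k. if j < d \<and> k < d then (\<Sum>a<d. of_real (lam a) * v a j * cnj (v a k)) else 0)"

lemma eig_decomp_spectral_mat: "orthonormal_fam d v \<Longrightarrow> eig_decomp d (spectral_mat d lam v) lam v"
  unfolding eig_decomp_def spectral_mat_def by simp

lemma herm_spectral_mat: "herm d (spectral_mat d lam v)"
  unfolding herm_def spectral_mat_def by (auto simp: mult_ac)

lemma herm_eq_spectral_mat:
  assumes "herm d A" and "eig_decomp d A lam v"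
  shows "A = spectral_mat d lam v"
  using assms unfolding herm_def eig_decomp_def spectral_mat_def by (intro ext) auto

lemma mat_fun_eig_decomp:
  assumes e: "eig_decomp d A lam v"
  shows "mat_fun d f A = spectral_mat d (f \<circ> lam) v"
  unfolding mat_fun_def
proof (rule the_equality)
  fix B assume "\<exists>lam' v'. eig_decomp d A lam' v' \<and> (\<forall>j k. B j k =
     (if j < d \<and> k < d then \<Sum>a<d. of_real (f (lam' a)) * v' a j * cnj (v' a k) else 0))"
  then obtain lam' v' where e': "eig_decomp d A lam' v'" and B: "B = spectral_mat d (f \<circ> lam') v'"
    unfolding spectral_mat_def by fastforce
  have "eig_decomp d B (f \<circ> lam) v"
    using eig_decomp_fun[OF e' e] eig_decomp_spectral_mat[OF eig_decomp_orthonormal[OF e']] B by simp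
  then show "B = spectral_mat d (f \<circ> lam) v" using herm_eq_spectral_mat B herm_spectral_mat by metis
qed (use e in \<open>auto simp: spectral_mat_def\<close>)

lemma sum_diagonal_eig_decomp:
  assumes "orthonormal_fam d v"
  shows "(\<Sum>j<d. \<Sum>a<d. of_real (g a) * v a j * cnj (v a j)) = (\<Sum>a<d. of_real (g a))"
proof -
  have "(\<Sum>j<d. \<Sum>a<d. of_real (g a) * v a j * cnj (v a j)) = (\<Sum>a<d. of_real (g a) * vinner d (v a) (v a))"
    unfolding vinner_def by (subst sum.swap) (simp add: sum_distrib_left mult_ac)
  also have "\<dots> = (\<Sum>a<d. of_real (g a))" using orthonormal_fam_vinner[OF assms] by simp
  finally show ?thesis .
qed

lemma mtrace_eig_decomp: "eig_decomp d A lam v \<Longrightarrow> mtrace d A = of_real (\<Sum>a<d. lam a)"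
  unfolding mtrace_def eig_decomp_def using sum_diagonal_eig_decomp[of d v lam] by simp

lemma hreg_eig_decomp: "eig_decomp d X lam v \<Longrightarrow> hreg d \<theta> X = (\<Sum>a<d. \<theta> (lam a))"
  unfolding hreg_def mat_fun_eig_decomp
  using mtrace_eig_decomp[OF eig_decomp_spectral_mat[OF eig_decomp_orthonormal], of d X lam v "\<theta> \<circ> lam"]
  by simp

lemma spectraplex_eigenvalues:
  assumes X: "X \<in> spectraplex d" and e: "eig_decomp d X lam v"
  shows "\<forall>a<d. 0 \<le> lam a" and "(\<Sum>a<d. lam a) = 1"
proof -
  show "\<forall>a<d. 0 \<le> lam a"
  proof (intro allI impI)
    fix a assume a: "a < d"
    have "vinner d (v a) (matvec d X (v a)) = of_real (lam a)"
      using vinner_scale_cong[of d "v a" 1 "v a" "matvec d X (v a)" "of_real (lam a)" "v a"]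
        eig_decomp_eigenvector[OF e a] orthonormal_fam_vinner[OF eig_decomp_orthonormal[OF e] a a]
      by simp
    moreover have "0 \<le> Re (vinner d (v a) (matvec d X (v a)))"
      using X unfolding spectraplex_def psd_def vinner_matvec_eq_sum by blast
    ultimately show "0 \<le> lam a" by simp
  qed
  have "mtrace d X = 1" using X unfolding spectraplex_def by simp
  then show "(\<Sum>a<d. lam a) = 1" using mtrace_eig_decomp[OF e] by (metis of_real_eq_1_iff)
qed

lemma spectraplex_herm: "X \<in> spectraplex d \<Longrightarrow> herm d X"
  unfolding spectraplex_def psd_def by simp

lemma spectraplex_eig_decomp: "X \<in> spectraplex d \<Longrightarrow> \<exists>x u. eig_decomp d X x u"
  using spectral_theorem herm_selfadjoint spectraplex_herm by blast

lemma spectraplex_eigenvalue_le_1: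
  assumes "X \<in> spectraplex d" and "eig_decomp d X lam v" and "a < d"
  shows "lam a \<le> 1"
proof -
  have "lam a \<le> (\<Sum>b<d. lam b)"
    using spectraplex_eigenvalues(1)[OF assms(1,2)] assms(3) by (intro member_le_sum) auto
  then show ?thesis using spectraplex_eigenvalues(2)[OF assms(1,2)] by simp
qed

lemma vinner_matvec_eig_decomp:
  assumes e: "eig_decomp d A lam v"
  shows "vinner d u (matvec d A u) = of_real (\<Sum>a<d. lam a * (cmod (vinner d (v a) u))\<^sup>2)"
proof -
  have "vinner d u (matvec d A u) = vinner d u (\<lambda>j. \<Sum>a<d. of_real (lam a) * vinner d (v a) u * v a j)"
    using matvec_eig_decomp[OF e] by (intro vinner_cong) auto
  also have "\<dots> = (\<Sum>a<d. of_real (lam a) * (vinner d (v a) u * cnj (vinner d (v a) u)))"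
    unfolding vinner_sum_right by (simp add: vinner_commute[of d u] mult_ac)
  also have "\<dots> = of_real (\<Sum>a<d. lam a * (cmod (vinner d (v a) u))\<^sup>2)"
    by (simp add: mult_cnj_eq_cmod_sq)
  finally show ?thesis .
qed

lemma spectral_mat_in_spectraplex:
  assumes on: "orthonormal_fam d v" and nonneg: "\<forall>a<d. 0 \<le> lam a" and sum1: "(\<Sum>a<d. lam a) = 1"
  shows "spectral_mat d lam v \<in> spectraplex d"
proof -
  have e: "eig_decomp d (spectral_mat d lam v) lam v" by (rule eig_decomp_spectral_mat[OF on])
  have "0 \<le> Re (vinner d u (matvec d (spectral_mat d lam v) u))" for u
    unfolding vinner_matvec_eig_decomp[OF e] Re_complex_of_real using nonneg by (intro sum_nonneg mult_nonneg_nonneg) auto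
  moreover have "mtrace d (spectral_mat d lam v) = 1" using mtrace_eig_decomp[OF e] sum1 by simp
  ultimately show ?thesis
    unfolding spectraplex_def psd_def vinner_matvec_eq_sum[symmetric] using herm_spectral_mat by simp
qed

lemma mtrace_mmult_eig_decomp:
  assumes e: "eig_decomp d X x u"
  shows "mtrace d (mmult d Y X) = (\<Sum>a<d. of_real (x a) * vinner d (u a) (matvec d Y (u a)))"
proof -
  have "mtrace d (mmult d Y X) = (\<Sum>j<d. \<Sum>l<d. \<Sum>a<d. of_real (x a) * (cnj (u a j) * Y j l * u a l))"
    unfolding mtrace_def mmult_def using e unfolding eig_decomp_def
    by (intro sum.cong refl) (simp add: sum_distrib_left mult_ac)
  also have "\<dots> = (\<Sum>a<d. of_real (x a) * vinner d (u a) (matvec d Y (u a)))"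
    unfolding vinner_matvec_eq_sum sum_distrib_left
    by (subst sum.swap, subst (2) sum.swap, rule refl)
  finally show ?thesis .
qed

lemma sum_overlaps_left:
  assumes "orthonormal_fam d w" and "orthonormal_fam d u" and "a < d"
  shows "(\<Sum>k<d. (cmod (vinner d (w k) (u a)))\<^sup>2) = 1"
proof -
  have "of_real (\<Sum>k<d. (cmod (vinner d (w k) (u a)))\<^sup>2) = vinner d (u a) (u a)"
    using parseval[OF assms(1), of "u a" "u a"] by (simp add: mult_cnj_eq_cmod_sq mult.commute)
  then show ?thesis using orthonormal_fam_vinner[OF assms(2,3,3)] by (metis of_real_eq_1_iff)
qed

lemma sum_overlaps_right:
  assumes "orthonormal_fam d w" and "orthonormal_fam d u" and "k < d"
  shows "(\<Sum>a<d. (cmod (vinner d (w k) (u a)))\<^sup>2) = 1"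
  using sum_overlaps_left[OF assms(2,1,3)] vinner_commute[of d "w k"] by (simp add: complex_mod_cnj)

definition mirror_objective :: "nat \<Rightarrow> (real \<Rightarrow> real) \<Rightarrow> cmat \<Rightarrow> cmat \<Rightarrow> real" where
  "mirror_objective d \<theta> Y X = Re (mtrace d (mmult d Y X)) - hreg d \<theta> X"

lemma Qmap_mirror_objective:
  "Qmap d \<theta> Y = (THE X. X \<in> spectraplex d \<and>
     (\<forall>X'\<in>spectraplex d. mirror_objective d \<theta> Y X' \<le> mirror_objective d \<theta> Y X))"
  unfolding Qmap_def mirror_objective_def ..

lemma mirror_objective_eig_decomp:
  assumes eY: "eig_decomp d Y lam w" and eX: "eig_decomp d X x u"
  shows "mirror_objective d \<theta> Y X
      = (\<Sum>k<d. \<Sum>a<d. (cmod (vinner d (w k) (u a)))\<^sup>2 * (lam k * x a - \<theta> (x a)))"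
proof -
  define \<omega> where "\<omega> = (\<lambda>k a. (cmod (vinner d (w k) (u a)))\<^sup>2)"
  have onw: "orthonormal_fam d w" and onu: "orthonormal_fam d u"
    using eY eX by (auto dest: eig_decomp_orthonormal)
  have "mtrace d (mmult d Y X) = (\<Sum>a<d. of_real (x a) * of_real (\<Sum>k<d. lam k * \<omega> k a))"
    unfolding mtrace_mmult_eig_decomp[OF eX] vinner_matvec_eig_decomp[OF eY] \<omega>_def ..
  also have "\<dots> = of_real (\<Sum>a<d. \<Sum>k<d. \<omega> k a * (lam k * x a))"
    by (simp add: sum_distrib_left mult_ac)
  finally have "Re (mtrace d (mmult d Y X)) = (\<Sum>a<d. \<Sum>k<d. \<omega> k a * (lam k * x a))"
    by simp
  moreover have "hreg d \<theta> X = (\<Sum>a<d. \<Sum>k<d. \<omega> k a * \<theta> (x a))"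
  proof -
    have "(\<Sum>k<d. \<omega> k a) = 1" if "a < d" for a
      unfolding \<omega>_def using sum_overlaps_left[OF onw onu that] .
    then show ?thesis unfolding hreg_eig_decomp[OF eX] sum_distrib_right[symmetric] by simp
  qed
  ultimately have "mirror_objective d \<theta> Y X = (\<Sum>a<d. \<Sum>k<d. \<omega> k a * (lam k * x a - \<theta> (x a)))"
    unfolding mirror_objective_def by (simp add: sum_subtractf right_diff_distrib)
  also have "\<dots> = (\<Sum>k<d. \<Sum>a<d. \<omega> k a * (lam k * x a - \<theta> (x a)))" by (rule sum.swap)
  finally show ?thesis unfolding \<omega>_def .
qed


section \<open>The mirror map\<close>

text \<open>The summands are Bregman divergences of \<open>\<theta>\<close>; the identity rests on the overlap weights
  \<open>|\<langle>w\<^sub>k, u\<^sub>a\<rangle>|\<^sup>2\<close> being doubly stochastic.\<close>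
lemma mirror_objective_deficit:
  fixes \<theta> \<theta>' :: "real \<Rightarrow> real"
  assumes eY: "eig_decomp d Y lam w" and eX: "eig_decomp d X x u"
    and q: "\<forall>k<d. \<theta>' (q k) = lam k - \<mu>" and sq: "(\<Sum>k<d. q k) = 1" and sx: "(\<Sum>a<d. x a) = 1"
  shows "(\<Sum>k<d. lam k * q k - \<theta> (q k)) - mirror_objective d \<theta> Y X
    = (\<Sum>k<d. \<Sum>a<d. (cmod (vinner d (w k) (u a)))\<^sup>2 * (\<theta> (x a) - \<theta> (q k) - \<theta>' (q k) * (x a - q k)))"
proof -
  define \<omega> where "\<omega> = (\<lambda>k a. (cmod (vinner d (w k) (u a)))\<^sup>2)"
  define c where "c = (\<lambda>k. lam k * q k - \<theta> (q k))"
  have onw: "orthonormal_fam d w" and onu: "orthonormal_fam d u"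
    using eY eX by (auto dest: eig_decomp_orthonormal)
  have row: "(\<Sum>k<d. \<omega> k a) = 1" if "a < d" for a using sum_overlaps_left[OF onw onu that] by (simp add: \<omega>_def)
  have col: "(\<Sum>a<d. \<omega> k a) = 1" if "k < d" for k using sum_overlaps_right[OF onw onu that] by (simp add: \<omega>_def)
  have "(\<Sum>k<d. \<Sum>a<d. \<omega> k a * (c k + \<mu> * (x a - q k)))
      = (\<Sum>k<d. c k * (\<Sum>a<d. \<omega> k a)) + \<mu> * (\<Sum>k<d. \<Sum>a<d. \<omega> k a * x a)
        - \<mu> * (\<Sum>k<d. q k * (\<Sum>a<d. \<omega> k a))"
    by (simp add: algebra_simps sum.distrib sum_subtractf sum_distrib_left)
  also have "(\<Sum>k<d. \<Sum>a<d. \<omega> k a * x a) = (\<Sum>a<d. x a * (\<Sum>k<d. \<omega> k a))"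
    by (subst sum.swap) (simp add: sum_distrib_left mult.commute)
  also have "\<dots> = 1" using row sx by simp
  also have "(\<Sum>k<d. q k * (\<Sum>a<d. \<omega> k a)) = 1" using col sq by simp
  also have "(\<Sum>k<d. c k * (\<Sum>a<d. \<omega> k a)) = (\<Sum>k<d. c k)" using col by simp
  finally have c: "(\<Sum>k<d. c k) = (\<Sum>k<d. \<Sum>a<d. \<omega> k a * (c k + \<mu> * (x a - q k)))" by simp
  have "(\<Sum>k<d. c k) - mirror_objective d \<theta> Y X
      = (\<Sum>k<d. \<Sum>a<d. \<omega> k a * (c k + \<mu> * (x a - q k)) - \<omega> k a * (lam k * x a - \<theta> (x a)))"
    unfolding c mirror_objective_eig_decomp[OF eY eX] \<omega>_def by (simp add: sum_subtractf)
  also have "\<dots> = (\<Sum>k<d. \<Sum>a<d. \<omega> k a * (\<theta> (x a) - \<theta> (q k) - \<theta>' (q k) * (x a - q k)))"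
  proof (intro sum.cong refl)
    fix k a assume "k \<in> {..<d}"
    then have "lam k = \<theta>' (q k) + \<mu>" using q by simp
    then show "\<omega> k a * (c k + \<mu> * (x a - q k)) - \<omega> k a * (lam k * x a - \<theta> (x a))
      = \<omega> k a * (\<theta> (x a) - \<theta> (q k) - \<theta>' (q k) * (x a - q k))" by (simp add: c_def algebra_simps)
  qed
  finally show ?thesis unfolding c_def \<omega>_def .
qed

lemma mirror_objective_spectral_mat:
  assumes eY: "eig_decomp d Y lam w"
  shows "mirror_objective d \<theta> Y (spectral_mat d q w) = (\<Sum>k<d. lam k * q k - \<theta> (q k))"
proof -
  have onw: "orthonormal_fam d w" using eY by (rule eig_decomp_orthonormal)
  have "mirror_objective d \<theta> Y (spectral_mat d q w)
      = (\<Sum>k<d. \<Sum>a<d. if a = k then lam k * q a - \<theta> (q a) else 0)"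
    unfolding mirror_objective_eig_decomp[OF eY eig_decomp_spectral_mat[OF onw]]
    by (intro sum.cong refl) (simp add: orthonormal_fam_vinner[OF onw])
  then show ?thesis by simp
qed

lemma at_within_unit_interval: "0 < x \<Longrightarrow> x < 1 \<Longrightarrow> at x within {0<..1} = at (x::real)"
  by (rule at_within_open_subset[of _ "{0<..<1}"]) auto

lemma steep_below:
  assumes "steep f" "0 < e1"
  shows "\<exists>e. 0 < e \<and> e \<le> e1 \<and> f e \<le> c"
proof -
  have "eventually (\<lambda>x. f x \<le> c) (at_right 0)"
    using assms(1) unfolding steep_def filterlim_at_bot by blast
  then obtain b where "b > 0" "\<forall>y>0. y < b \<longrightarrow> f y \<le> c"
    unfolding eventually_at_right_field by auto
  then show ?thesis using assms(2) by (intro exI[of _ "min (b / 2) e1"]) auto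
qed

locale regularizer =
  fixes \<theta> th1 th2 :: "real \<Rightarrow> real"
  assumes kernel: "regularizer_kernel \<theta> th1 th2"
begin

lemma th2_pos: "x \<in> {0<..1} \<Longrightarrow> 0 < th2 x"
  using kernel unfolding regularizer_kernel_def by force

lemma theta_has_derivative:
  assumes "0 < x" "x < 1"
  shows "(\<theta> has_real_derivative th1 x) (at x)"
proof -
  have "(\<theta> has_real_derivative th1 x) (at x within {0<..1})"
    using kernel assms unfolding regularizer_kernel_def by simp
  then show ?thesis using at_within_unit_interval[OF assms] by simp
qed

lemma th1_has_derivative_within: "x \<in> {0<..1} \<Longrightarrow> (th1 has_real_derivative th2 x) (at x within {0<..1})"
  using kernel unfolding regularizer_kernel_def by blast

lemma th1_has_derivative: "0 < x \<Longrightarrow> x < 1 \<Longrightarrow> (th1 has_real_derivative th2 x) (at x)"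
  using th1_has_derivative_within[of x] at_within_unit_interval[of x] by simp

lemma continuous_on_th1: "continuous_on {0<..1} th1"
  using DERIV_continuous_on th1_has_derivative_within by blast

lemma th1_mvt:
  assumes "0 < a" "a < b" "b \<le> 1"
  shows "\<exists>z. a < z \<and> z < b \<and> th1 b - th1 a = (b - a) * th2 z"
proof -
  have "continuous_on {a..b} th1"
    by (rule continuous_on_subset[OF continuous_on_th1]) (use assms in auto)
  moreover have "th1 differentiable (at x)" if "a < x" "x < b" for x
    using th1_has_derivative[of x] that assms real_differentiable_def by force
  ultimately obtain l z where z: "a < z" "z < b" "DERIV th1 z :> l" "th1 b - th1 a = (b - a) * l"
    using MVT[OF assms(2)] by blast
  moreover have "l = th2 z" using DERIV_unique[OF z(3) th1_has_derivative[of z]] z assms by simp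
  ultimately show ?thesis by blast
qed

lemma theta_mvt:
  assumes "0 \<le> a" "a < b" "b \<le> 1"
  shows "\<exists>z. a < z \<and> z < b \<and> \<theta> b - \<theta> a = (b - a) * th1 z"
proof -
  have "continuous_on {0..1} \<theta>" using kernel unfolding regularizer_kernel_def by simp
  then have "continuous_on {a..b} \<theta>" by (rule continuous_on_subset) (use assms in auto)
  moreover have "\<theta> differentiable (at x)" if "a < x" "x < b" for x
    using theta_has_derivative[of x] that assms real_differentiable_def by force
  ultimately obtain l z where z: "a < z" "z < b" "DERIV \<theta> z :> l" "\<theta> b - \<theta> a = (b - a) * l"
    using MVT[OF assms(2)] by blast
  moreover have "l = th1 z" using DERIV_unique[OF z(3) theta_has_derivative[of z]] z assms by simp
  ultimately show ?thesis by blast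
qed

lemma th1_strict_mono: "0 < a \<Longrightarrow> a < b \<Longrightarrow> b \<le> 1 \<Longrightarrow> th1 a < th1 b"
  using th1_mvt[of a b] th2_pos by (smt (verit) greaterThanAtMost_iff mult_pos_pos)

lemma th1_le_iff: "0 < a \<Longrightarrow> a \<le> 1 \<Longrightarrow> 0 < b \<Longrightarrow> b \<le> 1 \<Longrightarrow> th1 a \<le> th1 b \<longleftrightarrow> a \<le> b"
  using th1_strict_mono[of a b] th1_strict_mono[of b a] by (cases a b rule: linorder_cases) auto

lemma th1_inj: "0 < a \<Longrightarrow> a \<le> 1 \<Longrightarrow> 0 < b \<Longrightarrow> b \<le> 1 \<Longrightarrow> th1 a = th1 b \<Longrightarrow> a = b"
  using th1_le_iff[of a b] th1_le_iff[of b a] by simp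

lemma bregman_pos:
  assumes p: "0 < p" "p \<le> 1" and y: "0 \<le> y" "y \<le> 1" and "y \<noteq> p"
  shows "0 < \<theta> y - \<theta> p - th1 p * (y - p)"
proof (cases "p < y")
  case True
  then obtain z where z: "p < z" "z < y" "\<theta> y - \<theta> p = (y - p) * th1 z"
    using theta_mvt[of p y] p y by auto
  then have "\<theta> y - \<theta> p - th1 p * (y - p) = (y - p) * (th1 z - th1 p)" by (simp add: algebra_simps)
  moreover have "th1 p < th1 z" using th1_strict_mono z p y by simp
  ultimately show ?thesis using True by simp
next
  case False
  then have "y < p" using \<open>y \<noteq> p\<close> by simp
  then obtain z where z: "y < z" "z < p" "\<theta> p - \<theta> y = (p - y) * th1 z"
    using theta_mvt[of y p] p y by auto
  then have "\<theta> y - \<theta> p - th1 p * (y - p) = (p - y) * (th1 p - th1 z)" by (simp add: algebra_simps)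
  moreover have "th1 z < th1 p" using th1_strict_mono z p y by simp
  ultimately show ?thesis using \<open>y < p\<close> by simp
qed

lemma bregman_nonneg: "0 < p \<Longrightarrow> p \<le> 1 \<Longrightarrow> 0 \<le> y \<Longrightarrow> y \<le> 1 \<Longrightarrow> 0 \<le> \<theta> y - \<theta> p - th1 p * (y - p)"
  using bregman_pos[of p y] by (cases "y = p") auto

lemma th1_inverse:
  assumes e: "0 < e" "e \<le> 1"
  obtains g where "continuous_on {th1 e..th1 1} g"
    and "\<And>y. y \<in> {th1 e..th1 1} \<Longrightarrow> e \<le> g y \<and> g y \<le> 1 \<and> th1 (g y) = y"
    and "\<And>x. e \<le> x \<Longrightarrow> x \<le> 1 \<Longrightarrow> g (th1 x) = x"
    and "mono_on {th1 e..th1 1} g"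
proof
  let ?g = "the_inv_into {e..1} th1"
  have cont: "continuous_on {e..1} th1"
    by (rule continuous_on_subset[OF continuous_on_th1]) (use e in auto)
  have inj: "inj_on th1 {e..1}" using th1_inj e by (intro inj_onI) auto
  have img: "th1 ` {e..1} = {th1 e..th1 1}"
  proof
    show "th1 ` {e..1} \<subseteq> {th1 e..th1 1}" using e th1_le_iff by auto
    show "{th1 e..th1 1} \<subseteq> th1 ` {e..1}"
    proof
      fix y assume "y \<in> {th1 e..th1 1}"
      then obtain x where "e \<le> x" "x \<le> 1" "th1 x = y" using IVT'[of th1 e y 1] cont e by auto
      then show "y \<in> th1 ` {e..1}" by auto
    qed
  qed
  show "\<And>x. e \<le> x \<Longrightarrow> x \<le> 1 \<Longrightarrow> ?g (th1 x) = x" using the_inv_into_f_f[OF inj] by simp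
  then show "continuous_on {th1 e..th1 1} ?g"
    using continuous_on_inv[OF cont compact_Icc] img by (metis atLeastAtMost_iff)
  show g: "e \<le> ?g y \<and> ?g y \<le> 1 \<and> th1 (?g y) = y" if "y \<in> {th1 e..th1 1}" for y
    using the_inv_into_into[OF inj, of y "{e..1}"] f_the_inv_into_f[OF inj, of y] that img by auto
  show "mono_on {th1 e..th1 1} ?g"
    by (rule mono_onI) (use g th1_le_iff e in \<open>smt (verit)\<close>)
qed

text \<open>The Lagrange condition for maximising \<open>\<Sum>\<^sub>k \<lambda>\<^sub>k q\<^sub>k - \<theta>(q\<^sub>k)\<close> over the simplex has a
  solution with all \<open>q\<^sub>k > 0\<close>: the multiplier \<open>\<mu>\<close> is found by the intermediate value theorem,
  and steepness of \<open>\<theta>\<close> keeps the weights away from \<open>0\<close>.\<close>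
lemma exists_mirror_weights:
  fixes lam :: "nat \<Rightarrow> real" and d :: nat
  assumes steep: "steep th1" and d: "0 < d"
  shows "\<exists>q \<mu>. (\<forall>k<d. 0 < q k \<and> q k \<le> 1 \<and> th1 (q k) = lam k - \<mu>) \<and> (\<Sum>k<d. q k) = 1"
proof -
  define L where "L = Max (lam ` {..<d})"
  define m where "m = Min (lam ` {..<d})"
  have Lm: "m \<le> lam k \<and> lam k \<le> L" if "k < d" for k
    using that unfolding L_def m_def by (intro conjI Min_le Max_ge finite_imageI) auto
  have "L \<in> lam ` {..<d}" unfolding L_def using d by (intro Max_in) auto
  then obtain k0 where k0: "k0 < d" "lam k0 = L" by auto
  define e1 where "e1 = 1 / real d"
  have e1: "0 < e1" "e1 \<le> 1" "real d * e1 = 1" using d by (auto simp: e1_def)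
  define \<mu>0 where "\<mu>0 = L - th1 1"
  define \<mu>1 where "\<mu>1 = L - th1 e1"
  have \<mu>01: "\<mu>0 \<le> \<mu>1" using th1_le_iff[of e1 1] e1 by (simp add: \<mu>0_def \<mu>1_def)
  obtain e where e: "0 < e" "e \<le> e1" "th1 e \<le> m - \<mu>1" using steep_below[OF steep e1(1)] by blast
  obtain g where g_cont: "continuous_on {th1 e..th1 1} g"
    and g: "\<And>y. y \<in> {th1 e..th1 1} \<Longrightarrow> e \<le> g y \<and> g y \<le> 1 \<and> th1 (g y) = y"
    and g_th1: "\<And>x. e \<le> x \<Longrightarrow> x \<le> 1 \<Longrightarrow> g (th1 x) = x"
    and g_mono: "mono_on {th1 e..th1 1} g"
    using th1_inverse[of e] e e1 by auto
  have range: "lam k - \<mu> \<in> {th1 e..th1 1}" if "k < d" "\<mu> \<in> {\<mu>0..\<mu>1}" for k \<mu>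
    using that Lm[of k] e(3) by (auto simp: \<mu>0_def)
  define \<Phi> where "\<Phi> = (\<lambda>\<mu>. \<Sum>k<d. g (lam k - \<mu>))"
  have "continuous_on {\<mu>0..\<mu>1} \<Phi>"
    unfolding \<Phi>_def using range
    by (intro continuous_on_sum continuous_on_compose2[OF g_cont] continuous_intros) auto
  moreover have "1 \<le> \<Phi> \<mu>0"
  proof -
    have "g (lam k0 - \<mu>0) = 1" using g_th1[of 1] e e1 k0 by (simp add: \<mu>0_def)
    moreover have "g (lam k0 - \<mu>0) \<le> \<Phi> \<mu>0"
      unfolding \<Phi>_def using k0 g range \<mu>01 e(1) by (intro member_le_sum) force+
    ultimately show ?thesis by simp
  qed
  moreover have "\<Phi> \<mu>1 \<le> 1"
  proof -
    have "g (lam k - \<mu>1) \<le> e1" if "k < d" for k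
      using mono_onD[OF g_mono, of "lam k - \<mu>1" "L - \<mu>1"] range[OF that] range[OF k0(1)] Lm[OF that] k0 \<mu>01
        g_th1[of e1] e e1(2)
      by (simp add: \<mu>0_def \<mu>1_def)
    then have "\<Phi> \<mu>1 \<le> (\<Sum>k<d. e1)" unfolding \<Phi>_def by (intro sum_mono) auto
    then show ?thesis using e1 by simp
  qed
  ultimately obtain \<mu> where \<mu>: "\<mu> \<in> {\<mu>0..\<mu>1}" "\<Phi> \<mu> = 1" using IVT2'[of \<Phi> \<mu>1 1 \<mu>0] \<mu>01 by auto
  have "0 < g (lam k - \<mu>) \<and> g (lam k - \<mu>) \<le> 1 \<and> th1 (g (lam k - \<mu>)) = lam k - \<mu>" if "k < d" for k
    using g[OF range[OF that \<mu>(1)]] e(1) by auto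
  with \<mu>(2) show ?thesis unfolding \<Phi>_def by (intro exI[of _ "\<lambda>k. g (lam k - \<mu>)"] exI[of _ \<mu>]) simp
qed

lemma mirror_objective_le:
  assumes eY: "eig_decomp d Y lam w"
    and q: "\<forall>k<d. 0 < q k \<and> q k \<le> 1 \<and> th1 (q k) = lam k - \<mu>" and sq: "(\<Sum>k<d. q k) = 1"
    and X: "X \<in> spectraplex d" and eX: "eig_decomp d X x u"
  shows "mirror_objective d \<theta> Y X \<le> (\<Sum>k<d. lam k * q k - \<theta> (q k))"
    and "(\<Sum>k<d. lam k * q k - \<theta> (q k)) \<le> mirror_objective d \<theta> Y X
          \<Longrightarrow> \<forall>k<d. \<forall>a<d. vinner d (w k) (u a) \<noteq> 0 \<longrightarrow> x a = q k"
proof -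
  define D where "D = (\<lambda>k a. (cmod (vinner d (w k) (u a)))\<^sup>2 * (\<theta> (x a) - \<theta> (q k) - th1 (q k) * (x a - q k)))"
  have x: "0 \<le> x a" "x a \<le> 1" if "a < d" for a
    using spectraplex_eigenvalues(1)[OF X eX] spectraplex_eigenvalue_le_1[OF X eX] that by auto
  have deficit: "(\<Sum>k<d. lam k * q k - \<theta> (q k)) - mirror_objective d \<theta> Y X = (\<Sum>k<d. \<Sum>a<d. D k a)"
    unfolding D_def using q sq spectraplex_eigenvalues(2)[OF X eX]
    by (intro mirror_objective_deficit[OF eY eX, where \<theta>=\<theta> and \<theta>'=th1 and \<mu>=\<mu>]) simp_all
  have D: "0 \<le> D k a" if "k < d" "a < d" for k a
    unfolding D_def using bregman_nonneg[of "q k" "x a"] q x that by (intro mult_nonneg_nonneg) auto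
  then have D_sum: "0 \<le> (\<Sum>k<d. \<Sum>a<d. D k a)" by (auto intro!: sum_nonneg)
  then show "mirror_objective d \<theta> Y X \<le> (\<Sum>k<d. lam k * q k - \<theta> (q k))"
    using deficit by simp
  show "\<forall>k<d. \<forall>a<d. vinner d (w k) (u a) \<noteq> 0 \<longrightarrow> x a = q k"
    if "(\<Sum>k<d. lam k * q k - \<theta> (q k)) \<le> mirror_objective d \<theta> Y X"
  proof (intro allI impI)
    fix k a assume k: "k < d" and a: "a < d" and overlap: "vinner d (w k) (u a) \<noteq> 0"
    have "(\<Sum>k<d. \<Sum>a<d. D k a) = 0" using D_sum deficit that by simp
    then have "(\<Sum>a<d. D k a) = 0" using D k by (subst (asm) sum_nonneg_eq_0_iff) (auto intro: sum_nonneg)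
    then have "D k a = 0" using D k a by (subst (asm) sum_nonneg_eq_0_iff) auto
    then show "x a = q k"
      using bregman_pos[of "q k" "x a"] q x[OF a] k overlap unfolding D_def by fastforce
  qed
qed

lemma Qmap_eq_spectral_mat:
  assumes eY: "eig_decomp d Y lam w"
    and q: "\<forall>k<d. 0 < q k \<and> q k \<le> 1 \<and> th1 (q k) = lam k - \<mu>" and sq: "(\<Sum>k<d. q k) = 1"
  shows "Qmap d \<theta> Y = spectral_mat d q w"
proof -
  let ?obj = "mirror_objective d \<theta> Y" and ?X = "spectral_mat d q w" and ?c = "\<Sum>k<d. lam k * q k - \<theta> (q k)"
  have onw: "orthonormal_fam d w" using eY by (rule eig_decomp_orthonormal)
  have eX: "eig_decomp d ?X q w" by (rule eig_decomp_spectral_mat[OF onw])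
  have X: "?X \<in> spectraplex d" using spectral_mat_in_spectraplex[OF onw] q sq by (simp add: less_imp_le)
  have obj: "?obj ?X = ?c" by (rule mirror_objective_spectral_mat[OF eY])
  have "X' = ?X" if X': "X' \<in> spectraplex d" and max: "\<forall>X''\<in>spectraplex d. ?obj X'' \<le> ?obj X'" for X'
  proof -
    obtain x u where eX': "eig_decomp d X' x u" using spectraplex_eig_decomp[OF X'] by blast
    have "?c \<le> ?obj X'" using max X obj by metis
    then have overlap: "\<forall>k<d. \<forall>a<d. vinner d (w k) (u a) \<noteq> 0 \<longrightarrow> x a = q k"
      by (rule mirror_objective_le(2)[OF eY q sq X' eX'])
    have "matvec d X' (w k) j = of_real (q k) * w k j" if "k < d" "j < d" for k j
    proof (rule eigenvector_of_overlaps[OF eX' _ that(2)], intro allI impI)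
      fix a assume "a < d" "vinner d (u a) (w k) \<noteq> 0"
      then show "x a = q k" using overlap that(1) vinner_commute[of d "u a" "w k"] by auto
    qed
    then have "eig_decomp d X' q w" by (intro eig_decomp_of_eigenvectors[OF onw]) auto
    then show "X' = ?X" using herm_eq_spectral_mat spectraplex_herm[OF X'] by blast
  qed
  moreover have "?obj X' \<le> ?obj ?X" if X': "X' \<in> spectraplex d" for X'
  proof -
    obtain x u where "eig_decomp d X' x u" using spectraplex_eig_decomp[OF X'] by blast
    then show ?thesis using mirror_objective_le(1)[OF eY q sq X'] obj by simp
  qed
  ultimately show ?thesis unfolding Qmap_mirror_objective using X by (intro the_equality) blast+
qed

lemma Qmap_eigenvectors:
  assumes Y: "herm d Y" and d: "0 < d" and steep: "steep th1" and e: "eig_decomp d (Qmap d \<theta> Y) x u"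
  shows "Qmap d \<theta> Y \<in> spectraplex d"
    and "\<exists>\<mu>. \<forall>b<d. 0 < x b \<and> x b \<le> 1 \<and> (\<forall>j<d. matvec d Y (u b) j = of_real (th1 (x b) + \<mu>) * u b j)"
proof -
  obtain lam w where eY: "eig_decomp d Y lam w" using spectral_theorem herm_selfadjoint[OF Y] by blast
  have onw: "orthonormal_fam d w" using eY by (rule eig_decomp_orthonormal)
  obtain q \<mu> where q: "\<forall>k<d. 0 < q k \<and> q k \<le> 1 \<and> th1 (q k) = lam k - \<mu>" and sq: "(\<Sum>k<d. q k) = 1"
    using exists_mirror_weights[OF steep d] by blast
  have Q: "Qmap d \<theta> Y = spectral_mat d q w" by (rule Qmap_eq_spectral_mat[OF eY q sq])
  show X: "Qmap d \<theta> Y \<in> spectraplex d"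
    unfolding Q using spectral_mat_in_spectraplex[OF onw] q sq by (simp add: less_imp_le)
  have "mirror_objective d \<theta> Y (Qmap d \<theta> Y) = (\<Sum>k<d. lam k * q k - \<theta> (q k))"
    unfolding Q by (rule mirror_objective_spectral_mat[OF eY])
  then have overlap: "\<forall>k<d. \<forall>a<d. vinner d (w k) (u a) \<noteq> 0 \<longrightarrow> x a = q k"
    using mirror_objective_le(2)[OF eY q sq X e] by simp
  have "0 < x b \<and> x b \<le> 1 \<and> (\<forall>j<d. matvec d Y (u b) j = of_real (th1 (x b) + \<mu>) * u b j)"
    if b: "b < d" for b
  proof -
    have "\<exists>k<d. vinner d (w k) (u b) \<noteq> 0"
    proof (rule ccontr)
      assume "\<not> (\<exists>k<d. vinner d (w k) (u b) \<noteq> 0)"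
      then have "(\<Sum>k<d. (cmod (vinner d (w k) (u b)))\<^sup>2) = 0" by simp
      then show False using sum_overlaps_left[OF onw eig_decomp_orthonormal[OF e] b] by simp
    qed
    then obtain k where k: "k < d" "x b = q k" using overlap b by blast
    have "matvec d Y (u b) j = of_real (th1 (x b) + \<mu>) * u b j" if j: "j < d" for j
    proof (rule eigenvector_of_overlaps[OF eY _ j], intro allI impI)
      fix k' assume "k' < d" "vinner d (w k') (u b) \<noteq> 0"
      then have "x b = q k'" using overlap b by blast
      then show "lam k' = th1 (x b) + \<mu>" using q \<open>k' < d\<close> by simp
    qed
    then show ?thesis using k q by simp
  qed
  then show "\<exists>\<mu>. \<forall>b<d. 0 < x b \<and> x b \<le> 1 \<and> (\<forall>j<d. matvec d Y (u b) j = of_real (th1 (x b) + \<mu>) * u b j)"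
    by blast
qed

end


section \<open>Differentiation along the dynamics\<close>

lemma at_within_interval_ne_bot:
  fixes T :: "real set"
  assumes "is_interval T" and "\<exists>s\<in>T. \<exists>s'\<in>T. s \<noteq> s'" and "t \<in> T"
  shows "at t within T \<noteq> bot"
proof -
  have "t islimpt T"
    using assms by (intro connected_imp_perfect) (auto simp: is_interval_connected_1)
  then show ?thesis using trivial_limit_within by blast
qed

lemma has_vector_derivative_unique_on:
  assumes f: "(f has_vector_derivative D) (at t within T)" and g: "(g has_vector_derivative E) (at t within T)"
    and eq: "\<forall>s\<in>T. f s = g s" and t: "t \<in> T" and nb: "at t within T \<noteq> bot"
  shows "D = E"
proof -
  have "(f has_vector_derivative E) (at t within T)"
    by (rule has_vector_derivative_transform[OF t _ g]) (use eq in auto)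
  then show ?thesis using vector_derivative_unique_within[OF nb f] by simp
qed

lemma vinner_add_right: "vinner d u (\<lambda>j. v j + w j) = vinner d u v + vinner d u w"
  unfolding vinner_def by (simp add: distrib_left sum.distrib)

lemma has_vector_derivative_vinner:
  assumes "\<forall>j<d. ((\<lambda>s. v s j) has_vector_derivative v' j) (at t within T)"
    and "\<forall>j<d. ((\<lambda>s. w s j) has_vector_derivative w' j) (at t within T)"
  shows "((\<lambda>s. vinner d (v s) (w s)) has_vector_derivative vinner d v' (w t) + vinner d (v t) w')
           (at t within T)"
proof -
  have "((\<lambda>s. \<Sum>j<d. cnj (v s j) * w s j) has_vector_derivative
      (\<Sum>j<d. cnj (v t j) * w' j + cnj (v' j) * w t j)) (at t within T)"
    using assms by (intro has_vector_derivative_sum has_vector_derivative_mult has_vector_derivative_cnj) auto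
  then show ?thesis unfolding vinner_def by (rule has_vector_derivative_eq_rhs) (simp add: sum.distrib)
qed

lemma has_vector_derivative_matvec:
  assumes "\<forall>j<d. \<forall>l<d. ((\<lambda>s. M s j l) has_vector_derivative M' j l) (at t within T)"
    and "\<forall>l<d. ((\<lambda>s. v s l) has_vector_derivative v' l) (at t within T)" and "j < d"
  shows "((\<lambda>s. matvec d (M s) (v s) j) has_vector_derivative matvec d M' (v t) j + matvec d (M t) v' j)
           (at t within T)"
proof -
  have "((\<lambda>s. \<Sum>l<d. M s j l * v s l) has_vector_derivative (\<Sum>l<d. M t j l * v' l + M' j l * v t l))
      (at t within T)"
    using assms by (intro has_vector_derivative_sum has_vector_derivative_mult) auto
  then show ?thesis unfolding matvec_def by (rule has_vector_derivative_eq_rhs) (simp add: sum.distrib)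
qed

lemma has_vector_derivative_mel:
  assumes M: "\<forall>j<d. \<forall>l<d. ((\<lambda>s. M s j l) has_vector_derivative M' j l) (at t within T)"
    and u: "\<forall>a<d. \<forall>j<d. ((\<lambda>s. u s a j) has_vector_derivative u' a j) (at t within T)"
    and a: "a < d" and b: "b < d"
  shows "((\<lambda>s. mel d (u s) (M s) a b) has_vector_derivative
      vinner d (u' a) (matvec d (M t) (u t b)) + mel d (u t) M' a b + vinner d (u t a) (matvec d (M t) (u' b)))
      (at t within T)"
proof -
  have "((\<lambda>s. vinner d (u s a) (matvec d (M s) (u s b))) has_vector_derivative
      vinner d (u' a) (matvec d (M t) (u t b))
      + vinner d (u t a) (\<lambda>j. matvec d M' (u t b) j + matvec d (M t) (u' b) j)) (at t within T)"
    using has_vector_derivative_matvec[OF M, of "\<lambda>s. u s b" "u' b"] u a b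
    by (intro has_vector_derivative_vinner) auto
  then show ?thesis unfolding mel_eq_vinner vinner_add_right by (simp add: add.assoc)
qed

lemma eig_decomp_has_vector_derivative:
  assumes t: "t \<in> T" and e: "\<forall>s\<in>T. eig_decomp d (A s) (x s) (u s) \<and> herm d (A s)"
    and x: "\<forall>a<d. ((\<lambda>s. x s a) has_real_derivative x' a) (at t within T)"
    and u: "\<forall>a<d. \<forall>j<d. ((\<lambda>s. u s a j) has_vector_derivative u' a j) (at t within T)"
  shows "\<exists>A'. \<forall>j k. ((\<lambda>s. A s j k) has_vector_derivative A' j k) (at t within T)"
proof -
  have "\<exists>D. ((\<lambda>s. A s j k) has_vector_derivative D) (at t within T)" for j k
  proof (cases "j < d \<and> k < d")
    case True
    have D: "((\<lambda>s. \<Sum>a<d. of_real (x s a) * u s a j * cnj (u s a k)) has_vector_derivative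
        (\<Sum>a<d. of_real (x t a) * u t a j * cnj (u' a k)
          + (of_real (x t a) * u' a j + of_real (x' a) * u t a j) * cnj (u t a k))) (at t within T)"
      using x u True
      by (intro has_vector_derivative_sum has_vector_derivative_mult has_vector_derivative_cnj
          has_vector_derivative_of_real) auto
    show ?thesis
      by (intro exI, rule has_vector_derivative_transform[OF t _ D]) (use e True in \<open>simp add: eig_decomp_def\<close>)
  next
    case False
    show ?thesis
      by (intro exI, rule has_vector_derivative_transform[OF t _ has_vector_derivative_const])
        (use e False in \<open>auto simp: herm_def\<close>)
  qed
  then show ?thesis by metis
qed

lemma orthonormal_fam_derivative:
  assumes nb: "at t within T \<noteq> bot" and t: "t \<in> T" and on: "\<forall>s\<in>T. orthonormal_fam d (u s)"
    and u: "\<forall>a<d. \<forall>j<d. ((\<lambda>s. u s a j) has_vector_derivative u' a j) (at t within T)"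
    and a: "a < d" and b: "b < d"
  shows "vinner d (u' a) (u t b) + vinner d (u t a) (u' b) = 0"
proof -
  have "\<forall>j<d. ((\<lambda>s. u s a j) has_vector_derivative u' a j) (at t within T)"
    and "\<forall>j<d. ((\<lambda>s. u s b j) has_vector_derivative u' b j) (at t within T)"
    using u a b by auto
  from has_vector_derivative_vinner[OF this] show ?thesis
    by (rule has_vector_derivative_unique_on[OF _ has_vector_derivative_const[of "if a = b then 1 else 0"] _ t nb])
      (use on a b in \<open>simp add: orthonormal_fam_vinner\<close>)
qed

text \<open>First-order perturbation theory: differentiate \<open>M(s) u\<^sub>b(s) = m\<^sub>b(s) u\<^sub>b(s)\<close> and pair it
  with \<open>u\<^sub>a(s)\<close>, using that \<open>\<langle>u\<^sub>a, u\<^sub>b\<rangle>\<close> is constant.\<close>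
lemma eigenbasis_derivative:
  fixes M :: "real \<Rightarrow> cmat" and m :: "real \<Rightarrow> nat \<Rightarrow> real"
  assumes nb: "at t within T \<noteq> bot" and t: "t \<in> T"
    and on: "\<forall>s\<in>T. orthonormal_fam d (u s)"
    and eigen: "\<forall>s\<in>T. \<forall>b<d. \<forall>j<d. matvec d (M s) (u s b) j = of_real (m s b) * u s b j"
    and sa: "\<forall>j<d. \<forall>l<d. M t j l = cnj (M t l j)"
    and u: "\<forall>a<d. \<forall>j<d. ((\<lambda>s. u s a j) has_vector_derivative u' a j) (at t within T)"
    and M: "\<forall>j<d. \<forall>l<d. ((\<lambda>s. M s j l) has_vector_derivative M' j l) (at t within T)"
    and a: "a < d" and b: "b < d"
  shows "a \<noteq> b \<Longrightarrow> mel d (u t) M' a b = of_real (m t b - m t a) * vinner d (u t a) (u' b)"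
    and "((\<lambda>s. of_real (m s a)) has_vector_derivative mel d (u t) M' a a) (at t within T)"
proof -
  have mel: "mel d (u s) (M s) a' b' = (if a' = b' then of_real (m s b') else 0)"
    if "s \<in> T" "a' < d" "b' < d" for s a' b'
    using vinner_scale_cong[of d "u s a'" 1 "u s a'" "matvec d (M s) (u s b')" "of_real (m s b')" "u s b'"]
      eigen on that by (simp add: mel_eq_vinner orthonormal_fam_vinner)
  have D: "((\<lambda>s. mel d (u s) (M s) a' b') has_vector_derivative of_real (m t b') * vinner d (u' a') (u t b')
      + mel d (u t) M' a' b' + of_real (m t a') * vinner d (u t a') (u' b')) (at t within T)"
    if "a' < d" "b' < d" for a' b'
  proof -
    have "vinner d (u' a') (matvec d (M t) (u t b')) = of_real (m t b') * vinner d (u' a') (u t b')"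
      using vinner_scale_cong[of d "u' a'" 1 "u' a'" "matvec d (M t) (u t b')" "of_real (m t b')" "u t b'"]
        eigen t that by simp
    moreover have "vinner d (u t a') (matvec d (M t) (u' b')) = of_real (m t a') * vinner d (u t a') (u' b')"
      using vinner_matvec_selfadjoint[OF sa, of "u t a'" "u' b'"] eigen t that
        vinner_scale_cong[of d "matvec d (M t) (u t a')" "of_real (m t a')" "u t a'" "u' b'" 1 "u' b'"]
      by simp
    ultimately show ?thesis using has_vector_derivative_mel[OF M u that] by simp
  qed
  show "mel d (u t) M' a b = of_real (m t b - m t a) * vinner d (u t a) (u' b)" if "a \<noteq> b"
  proof -
    have "of_real (m t b) * vinner d (u' a) (u t b) + mel d (u t) M' a b
        + of_real (m t a) * vinner d (u t a) (u' b) = 0"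
      by (rule has_vector_derivative_unique_on[OF D[OF a b] has_vector_derivative_const[of 0] _ t nb])
        (use mel a b that in simp)
    moreover have "vinner d (u' a) (u t b) = - vinner d (u t a) (u' b)"
      using orthonormal_fam_derivative[OF nb t on u a b] by (simp add: eq_neg_iff_add_eq_0)
    ultimately show ?thesis by (simp add: algebra_simps)
  qed
  have "of_real (m t a) * vinner d (u' a) (u t a) + mel d (u t) M' a a
      + of_real (m t a) * vinner d (u t a) (u' a) = mel d (u t) M' a a"
    using orthonormal_fam_derivative[OF nb t on u a a] by (simp add: algebra_simps flip: distrib_left)
  with D[OF a a] have "((\<lambda>s. mel d (u s) (M s) a a) has_vector_derivative mel d (u t) M' a a) (at t within T)"
    by (rule has_vector_derivative_eq_rhs)
  then show "((\<lambda>s. of_real (m s a)) has_vector_derivative mel d (u t) M' a a) (at t within T)"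
    by (rule has_vector_derivative_transform[OF t, rotated]) (use mel a in simp)
qed

text \<open>The right-hand side of the eigenbasis formula for \<open>X'\<close>: \<open>x\<close> are the eigenvalues of \<open>X\<close> and
  \<open>V \<alpha> \<beta>\<close> the matrix elements of the payoff gradient in the eigenbasis of \<open>X\<close>.\<close>
definition eigenbasis_velocity ::
  "(real \<Rightarrow> real) \<Rightarrow> (real \<Rightarrow> real) \<Rightarrow> nat \<Rightarrow> (nat \<Rightarrow> real) \<Rightarrow> (nat \<Rightarrow> nat \<Rightarrow> complex) \<Rightarrow> nat \<Rightarrow> nat \<Rightarrow> complex"
  where "eigenbasis_velocity th1 th2 d x V \<alpha> \<beta> =
    (if \<alpha> = \<beta> then
       V \<alpha> \<alpha> / of_real (th2 (x \<alpha>))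
       - (\<Sum>\<gamma><d. V \<gamma> \<gamma> / of_real (th2 (x \<gamma>))) / of_real (\<Sum>\<gamma><d. th2 (x \<alpha>) / th2 (x \<gamma>))
     else of_real (dquot th1 th2 (x \<beta>) (x \<alpha>)) * V \<alpha> \<beta>)"

lemma dquot_offdiagonal:
  fixes z v c :: complex
  assumes z: "z = of_real (x - y) * c" and v: "v = of_real (f x - f y) * c"
    and inj: "f x = f y \<Longrightarrow> x = y"
  shows "z = of_real (dquot f f' x y) * v"
proof (cases "x = y")
  case True
  then show ?thesis using z v by simp
next
  case False
  then have "f x - f y \<noteq> 0" using inj by auto
  moreover have "of_real (dquot f f' x y) * v = of_real ((x - y) / (f x - f y) * (f x - f y)) * c"
    using False unfolding v dquot_def of_real_mult by (simp add: mult.assoc)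
  ultimately show ?thesis using z by simp
qed

lemma diagonal_solution:
  fixes z v :: "nat \<Rightarrow> complex" and h :: "nat \<Rightarrow> real"
  assumes h: "\<forall>g<d. 0 < h g" and v: "\<forall>g<d. v g = of_real (h g) * z g + K"
    and z: "(\<Sum>g<d. z g) = 0" and a: "a < d"
  shows "z a = v a / of_real (h a) - (\<Sum>g<d. v g / of_real (h g)) / of_real (\<Sum>g<d. h a / h g)"
proof -
  define S where "S = (\<Sum>g<d. 1 / h g)"
  have S: "0 < S" unfolding S_def using h a by (intro sum_pos) auto
  have "(\<Sum>g<d. v g / of_real (h g)) = (\<Sum>g<d. z g + K * of_real (1 / h g))"
  proof (intro sum.cong refl)
    fix g assume "g \<in> {..<d}"
    then have "h g \<noteq> 0" "v g = of_real (h g) * z g + K" using h v by auto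
    then show "v g / of_real (h g) = z g + K * of_real (1 / h g)" by (simp add: field_simps)
  qed
  also have "\<dots> = K * of_real S" using z by (simp add: S_def sum.distrib sum_distrib_left)
  finally have num: "(\<Sum>g<d. v g / of_real (h g)) = K * of_real S" .
  have den: "(\<Sum>g<d. h a / h g) = h a * S" unfolding S_def by (simp add: sum_distrib_left)
  have "h a \<noteq> 0" and va: "v a = of_real (h a) * z a + K" using h v a by auto
  then show ?thesis using S unfolding num den va by (simp add: field_simps)
qed

context regularizer
begin

lemma has_real_derivative_th1_comp:
  assumes f: "(f has_real_derivative f') (at t within T)" and range: "\<forall>s\<in>T. f s \<in> {0<..1}" and t: "t \<in> T"
  shows "((\<lambda>s. th1 (f s)) has_real_derivative f' * th2 (f t)) (at t within T)"
proof -
  have "(th1 has_real_derivative th2 (f t)) (at (f t) within f ` T)"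
    using has_field_derivative_subset[OF th1_has_derivative_within] range t by blast
  from DERIV_image_chain[OF this f] show ?thesis by (simp add: o_def mult.commute)
qed

text \<open>On the diagonal \<open>[Y']\<^sub>\<gamma>\<^sub>\<gamma> = \<theta>''(x\<^sub>\<gamma>) x\<^sub>\<gamma>' + \<mu>'\<close>, and \<open>\<mu>'\<close> is determined by \<open>\<Sum>\<^sub>\<gamma> x\<^sub>\<gamma>' = 0\<close>.\<close>
lemma diagonal_velocity:
  fixes x :: "real \<Rightarrow> nat \<Rightarrow> real" and \<mu> :: "real \<Rightarrow> real" and v :: "nat \<Rightarrow> complex"
  assumes nb: "at t within T \<noteq> bot" and t: "t \<in> T"
    and x: "\<forall>s\<in>T. \<forall>g<d. 0 < x s g \<and> x s g \<le> 1" and trace: "\<forall>s\<in>T. (\<Sum>g<d. x s g) = 1"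
    and dx: "\<forall>g<d. ((\<lambda>s. x s g) has_real_derivative x' g) (at t within T)"
    and v: "\<forall>g<d. ((\<lambda>s. of_real (th1 (x s g) + \<mu> s)) has_vector_derivative v g) (at t within T)"
    and \<alpha>: "\<alpha> < d"
  shows "of_real (x' \<alpha>) = v \<alpha> / of_real (th2 (x t \<alpha>))
           - (\<Sum>\<gamma><d. v \<gamma> / of_real (th2 (x t \<gamma>))) / of_real (\<Sum>\<gamma><d. th2 (x t \<alpha>) / th2 (x t \<gamma>))"
proof -
  have d\<mu>: "((\<lambda>s. of_real (\<mu> s)) has_vector_derivative v g - of_real (th2 (x t g)) * of_real (x' g))
      (at t within T)" if g: "g < d" for g
  proof -
    have "((\<lambda>s. th1 (x s g)) has_real_derivative x' g * th2 (x t g)) (at t within T)"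
      using has_real_derivative_th1_comp[OF dx[rule_format, OF g] _ t] x g by auto
    from has_vector_derivative_diff[OF v[rule_format, OF g] has_vector_derivative_of_real[OF this]]
    show ?thesis by (simp add: mult.commute)
  qed
  define K where "K = v \<alpha> - of_real (th2 (x t \<alpha>)) * of_real (x' \<alpha>)"
  have v_diag: "\<forall>g<d. v g = of_real (th2 (x t g)) * of_real (x' g) + K"
    using vector_derivative_unique_within[OF nb d\<mu> d\<mu>[OF \<alpha>]] unfolding K_def by (simp add: algebra_simps)
  have "((\<lambda>s. \<Sum>g<d. x s g) has_vector_derivative (\<Sum>g<d. x' g)) (at t within T)"
    using dx by (intro has_vector_derivative_sum) (auto simp: has_real_derivative_iff_has_vector_derivative)
  then have "(\<Sum>g<d. x' g) = 0"
    by (rule has_vector_derivative_unique_on[OF _ has_vector_derivative_const[of 1] _ t nb]) (use trace in simp)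
  then have x'_sum: "(\<Sum>g<d. complex_of_real (x' g)) = 0" by (simp flip: of_real_sum)
  have "\<forall>g<d. 0 < th2 (x t g)" using th2_pos x t by simp
  from diagonal_solution[OF this v_diag x'_sum \<alpha>] show ?thesis .
qed

text \<open>Since \<open>Y u\<^sub>b = (\<theta>'(x\<^sub>b) + \<mu>) u\<^sub>b\<close>, off the diagonal the eigenbasis derivatives of \<open>X\<close> and \<open>Y\<close>
  differ by the factor \<open>(x\<^sub>\<beta> - x\<^sub>\<alpha>)/(\<theta>'(x\<^sub>\<beta>) - \<theta>'(x\<^sub>\<alpha>))\<close>.\<close>
lemma mirror_trajectory_derivative:
  fixes X Y :: "real \<Rightarrow> cmat" and x :: "real \<Rightarrow> nat \<Rightarrow> real" and \<mu> :: "real \<Rightarrow> real"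
  assumes nb: "at t within T \<noteq> bot" and t: "t \<in> T"
    and X: "\<forall>s\<in>T. eig_decomp d (X s) (x s) (u s)" and trace: "\<forall>s\<in>T. (\<Sum>a<d. x s a) = 1"
    and Y: "\<forall>s\<in>T. \<forall>b<d. 0 < x s b \<and> x s b \<le> 1 \<and>
                 (\<forall>j<d. matvec d (Y s) (u s b) j = of_real (th1 (x s b) + \<mu> s) * u s b j)"
    and Yt: "herm d (Y t)"
    and dx: "\<forall>a<d. ((\<lambda>s. x s a) has_real_derivative x' a) (at t within T)"
    and du: "\<forall>a<d. \<forall>j<d. ((\<lambda>s. u s a j) has_vector_derivative u' a j) (at t within T)"
    and dX: "\<forall>j<d. \<forall>l<d. ((\<lambda>s. X s j l) has_vector_derivative X' j l) (at t within T)"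
    and dY: "\<forall>j<d. \<forall>l<d. ((\<lambda>s. Y s j l) has_vector_derivative V j l) (at t within T)"
    and \<alpha>: "\<alpha> < d" and \<beta>: "\<beta> < d"
  shows "mel d (u t) X' \<alpha> \<beta> = eigenbasis_velocity th1 th2 d (x t) (mel d (u t) V) \<alpha> \<beta>"
proof -
  have on: "\<forall>s\<in>T. orthonormal_fam d (u s)" using X eig_decomp_orthonormal by blast
  have eX: "\<forall>s\<in>T. \<forall>b<d. \<forall>j<d. matvec d (X s) (u s b) j = of_real (x s b) * u s b j"
    using X eig_decomp_eigenvector by blast
  have eY: "\<forall>s\<in>T. \<forall>b<d. \<forall>j<d. matvec d (Y s) (u s b) j = of_real (th1 (x s b) + \<mu> s) * u s b j"
    using Y by blast
  note X_deriv = eigenbasis_derivative[OF nb t on eX eig_decomp_selfadjoint[OF X[rule_format, OF t]] du dX]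
  note Y_deriv = eigenbasis_derivative[OF nb t on eY herm_selfadjoint[OF Yt] du dY]
  show ?thesis
  proof (cases "\<alpha> = \<beta>")
    case False
    have inj: "th1 (x t \<beta>) = th1 (x t \<alpha>) \<Longrightarrow> x t \<beta> = x t \<alpha>" using th1_inj Y t \<alpha> \<beta> by blast
    have "mel d (u t) V \<alpha> \<beta> = of_real (th1 (x t \<beta>) - th1 (x t \<alpha>)) * vinner d (u t \<alpha>) (u' \<beta>)"
      using Y_deriv(1)[OF \<alpha> \<beta> False] by simp
    from dquot_offdiagonal[OF X_deriv(1)[OF \<alpha> \<beta> False] this inj] show ?thesis
      using False by (simp add: eigenbasis_velocity_def)
  next
    case True
    have "\<forall>g<d. ((\<lambda>s. of_real (th1 (x s g) + \<mu> s)) has_vector_derivative mel d (u t) V g g)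
        (at t within T)"
      using Y_deriv(2) by blast
    note diagonal = diagonal_velocity[OF nb t _ trace dx this \<alpha>]
    have "mel d (u t) X' \<alpha> \<alpha> = of_real (x' \<alpha>)"
      using vector_derivative_unique_within[OF nb X_deriv(2)[OF \<alpha> \<alpha>]
          has_vector_derivative_of_real[OF dx[rule_format, OF \<alpha>]]] .
    also have "\<dots> = eigenbasis_velocity th1 th2 d (x t) (mel d (u t) V) \<alpha> \<alpha>"
      unfolding eigenbasis_velocity_def using diagonal Y by simp
    finally show ?thesis using True by simp
  qed
qed

lemma mirror_trajectory_has_derivative:
  fixes X Y :: "real \<Rightarrow> cmat"
  assumes d: "0 < d" and steep: "steep th1" and nb: "at t within T \<noteq> bot" and t: "t \<in> T"
    and Q: "\<forall>s\<in>T. X s = Qmap d \<theta> (Y s)" and Y: "\<forall>s\<in>T. herm d (Y s)"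
    and eX: "\<forall>s\<in>T. eig_decomp d (X s) (x s) (u s)"
    and diff: "\<forall>\<alpha><d. (\<lambda>s. x s \<alpha>) differentiable (at t within T) \<and>
                 (\<forall>j<d. (\<lambda>s. u s \<alpha> j) differentiable (at t within T))"
    and dY: "\<forall>j<d. \<forall>l<d. ((\<lambda>s. Y s j l) has_vector_derivative V j l) (at t within T)"
  shows "\<exists>X'. (\<forall>j k. ((\<lambda>s. X s j k) has_vector_derivative X' j k) (at t within T)) \<and>
     (\<forall>\<alpha><d. \<forall>\<beta><d. mel d (u t) X' \<alpha> \<beta> = eigenbasis_velocity th1 th2 d (x t) (mel d (u t) V) \<alpha> \<beta>)"
proof -
  have mirror: "X s \<in> spectraplex d \<and> (\<exists>\<mu>. \<forall>b<d. 0 < x s b \<and> x s b \<le> 1 \<and>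
      (\<forall>j<d. matvec d (Y s) (u s b) j = of_real (th1 (x s b) + \<mu>) * u s b j))" if "s \<in> T" for s
  proof -
    have "herm d (Y s)" and e: "eig_decomp d (Qmap d \<theta> (Y s)) (x s) (u s)" using Q Y eX that by auto
    from Qmap_eigenvectors[OF this(1) d steep e] show ?thesis using Q that by simp
  qed
  then obtain \<mu> where \<mu>: "\<forall>s\<in>T. \<forall>b<d. 0 < x s b \<and> x s b \<le> 1 \<and>
      (\<forall>j<d. matvec d (Y s) (u s b) j = of_real (th1 (x s b) + \<mu> s) * u s b j)"
    by metis
  have trace: "\<forall>s\<in>T. (\<Sum>a<d. x s a) = 1" using spectraplex_eigenvalues(2) mirror eX by blast
  define x' where "x' a = vector_derivative (\<lambda>s. x s a) (at t within T)" for a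
  define u' where "u' a j = vector_derivative (\<lambda>s. u s a j) (at t within T)" for a j
  have dx: "\<forall>a<d. ((\<lambda>s. x s a) has_real_derivative x' a) (at t within T)"
    using diff vector_derivative_works has_real_derivative_iff_has_vector_derivative
    unfolding x'_def by blast
  have du: "\<forall>a<d. \<forall>j<d. ((\<lambda>s. u s a j) has_vector_derivative u' a j) (at t within T)"
    using diff vector_derivative_works unfolding u'_def by blast
  have "\<forall>s\<in>T. eig_decomp d (X s) (x s) (u s) \<and> herm d (X s)"
    using eX mirror spectraplex_herm by blast
  from eig_decomp_has_vector_derivative[OF t this dx du]
  obtain X' where dX: "\<forall>j k. ((\<lambda>s. X s j k) has_vector_derivative X' j k) (at t within T)"
    by blast
  then show ?thesis
    using mirror_trajectory_derivative[OF nb t eX trace \<mu> Y[rule_format, OF t] dx du _ dY] by blast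
qed

end

theorem theorem1:
  fixes N :: nat and d :: "nat \<Rightarrow> nat" and \<Omega> :: "'w set" and P :: "'w \<Rightarrow> jop"
    and U :: "nat \<Rightarrow> 'w \<Rightarrow> real"
    and \<theta> th1 th2 :: "nat \<Rightarrow> real \<Rightarrow> real"
    and T :: "real set" and Y X :: "real \<Rightarrow> nat \<Rightarrow> cmat"
    and i :: nat and x :: "real \<Rightarrow> nat \<Rightarrow> real" and u :: "real \<Rightarrow> nat \<Rightarrow> nat \<Rightarrow> complex"
  assumes dims: "\<forall>p<N. 1 \<le> d p"
    and game: "povm N d \<Omega> P"
    and reg: "\<forall>p<N. regularizer_kernel (\<theta> p) (th1 p) (th2 p)"
    and i: "i < N"
    and steep_i: "steep (th1 i)"
    and T: "is_interval T" "\<exists>s\<in>T. \<exists>s'\<in>T. s \<noteq> s'"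
    and X_def: "\<forall>t p. X t p = Qmap (d p) (\<theta> p) (Y t p)"
    and Y_herm: "\<forall>t\<in>T. \<forall>p<N. herm (d p) (Y t p)"
    and FTQL: "\<forall>t\<in>T. \<forall>p<N. \<forall>j k.
        ((\<lambda>s. Y s p j k) has_vector_derivative Vgrad N d \<Omega> P U p (X t) j k) (at t within T)"
    and eig: "\<forall>t\<in>T. eig_decomp (d i) (X t i) (x t) (u t)"
    and eig_diff: "\<forall>t\<in>T. \<forall>\<alpha><d i. (\<lambda>s. x s \<alpha>) differentiable (at t within T) \<and>
                       (\<forall>j<d i. (\<lambda>s. u s \<alpha> j) differentiable (at t within T))"
  shows "\<forall>t\<in>T. \<exists>Xd :: cmat.
     (\<forall>j k. ((\<lambda>s. X s i j k) has_vector_derivative Xd j k) (at t within T)) \<and>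
     (\<forall>\<alpha><d i. \<forall>\<beta><d i.
        mel (d i) (u t) Xd \<alpha> \<beta> =
          (if \<alpha> = \<beta> then
             mel (d i) (u t) (Vgrad N d \<Omega> P U i (X t)) \<alpha> \<alpha> / of_real (th2 i (x t \<alpha>))
             - (\<Sum>\<gamma><d i. mel (d i) (u t) (Vgrad N d \<Omega> P U i (X t)) \<gamma> \<gamma> / of_real (th2 i (x t \<gamma>)))
               / of_real (\<Sum>\<gamma><d i. th2 i (x t \<alpha>) / th2 i (x t \<gamma>))
           else of_real (dquot (th1 i) (th2 i) (x t \<beta>) (x t \<alpha>))
                * mel (d i) (u t) (Vgrad N d \<Omega> P U i (X t)) \<alpha> \<beta>))"
proof -
  interpret regularizer "\<theta> i" "th1 i" "th2 i" using reg i by unfold_locales auto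
  have "\<forall>s\<in>T. X s i = Qmap (d i) (\<theta> i) (Y s i)" using X_def by blast
  then show ?thesis
    using dims i steep_i Y_herm FTQL eig eig_diff at_within_interval_ne_bot[OF T]
    by (intro ballI mirror_trajectory_has_derivative[unfolded eigenbasis_velocity_def]) auto
qed

end
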